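(* Let $t\in\mathbb{C}^\times$. A linear map $T\colon\mathcal{A}\to\mathbb{C}$ is a $g_t$-twisted trace if and only if $T$ vanishes on $\mathcal{A}_i$ for all $i\neq 0$ and, identifying $\mathcal{A}_0=\mathbb{C}[Z,Z^{-1}]$ with $\mathbb{C}[z,z^{-1}]$, \[ T\big(P(q^{-1}z)R(q^{-1}z)-tP(qz)R(qz)\big)=0\qquad\text{for all } R\in\mathbb{C}[z,z^{-1}]. \] Moreover, the space of $g_t$-twisted traces on $\mathcal{A}$ has dimension $n$.
   Context: Let $q\in\mathbb{C}$ with $0<|q|<1$. Let $P\in\mathbb{C}[z,z^{-1}]$ be a Laurent polynomial, $P=az^k+\dots+bz^l$ with $a,b\neq0$, $k\ge l$, and let $n=k-l$ (the number of nonzero roots of $P$ counted with multiplicity); assume $n>0$. The generalized $q$-Weyl algebra $\mathcal{A}=\mathcal{A}_P$ is the $\mathbb{C}$-algebra generated by $u,v,Z,Z^{-1}$ with relations $ZZ^{-1}=Z^{-1}Z=1$, $ZuZ^{-1}=q^2u$, $ZvZ^{-1}=q^{-2}v$, $uv=P(q^{-1}Z)$, $vu=P(qZ)$. For $i\in\mathbb{Z}$ let $\mathcal{A}_i=\{a\in\mathcal{A}: ZaZ^{-1}=q^{2i}a\}$; then $\mathcal{A}=\bigoplus_{i\in\mathbb{Z}}\mathcal{A}_i$, with $\mathcal{A}_i=u^i\mathbb{C}[Z,Z^{-1}]$ for $i\ge0$ and $\mathcal{A}_i=v^{-i}\mathbb{C}[Z,Z^{-1}]$ for $i\le 0$. For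 $t\in\mathbb{C}^\times$, $g_t$ denotes the automorphism of $\mathcal{A}$ with $g_t(u)=tu$, $g_t(v)=t^{-1}v$, $g_t(Z)=Z$. A linear map $T\colon\mathcal{A}\to\mathbb{C}$ is a $g_t$-twisted trace if $T(ab)=T(b\,g_t(a))$ for all $a,b\in\mathcal{A}$. *)

theory Defs
  imports Complex_Main "HOL-Library.Function_Algebras"
begin

text \<open>We work inside the skew Laurent polynomial ring over C[Z,Z^-1] in a variable u
  (u invertible), with Z u = q^2 u Z.  An element is a finitely supported coefficient
  function x :: int \<times> int \<Rightarrow> complex, where x (i,j) is the coefficient of u^i Z^j.
  The algebra A_P is the subalgebra generated by u, v, Z, Z^-1 with
  v = u^-1 P(q^-1 Z).\<close>

type_synonym elt = "int \<times> int \<Rightarrow> complex"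

definition supp :: "elt \<Rightarrow> (int \<times> int) set" where
  "supp x = {p. x p \<noteq> 0}"

text \<open>(u^a Z^c)(u^b Z^d) = q^(2bc) u^(a+b) Z^(c+d)\<close>
definition mult :: "complex \<Rightarrow> elt \<Rightarrow> elt \<Rightarrow> elt" where
  "mult q x y = (\<lambda>(i,j). \<Sum>p\<in>supp x.
       x p * y (i - fst p, j - snd p) * q powi (2 * (i - fst p) * snd p))"

definition smul :: "complex \<Rightarrow> elt \<Rightarrow> elt" where
  "smul c x = (\<lambda>p. c * x p)"

definition mono :: "int \<Rightarrow> int \<Rightarrow> elt" where
  "mono i j = (\<lambda>p. if p = (i,j) then 1 else 0)"

text \<open>A Laurent polynomial f (finitely supported coefficient function int \<Rightarrow> complex)
  evaluated at c Z, as an element of degree 0: f(cZ) = sum_j f_j c^j Z^j.\<close>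
definition lp :: "(int \<Rightarrow> complex) \<Rightarrow> complex \<Rightarrow> elt" where
  "lp f c = (\<lambda>(i,j). if i = 0 then f j * c powi j else 0)"

definition vgen :: "complex \<Rightarrow> (int \<Rightarrow> complex) \<Rightarrow> elt" where
  "vgen q P = mult q (mono (-1) 0) (lp P (inverse q))"

inductive_set qWeyl :: "complex \<Rightarrow> (int \<Rightarrow> complex) \<Rightarrow> elt set"
  for q :: complex and P :: "int \<Rightarrow> complex" where
  gen_one: "mono 0 0 \<in> qWeyl q P"
| gen_u: "mono 1 0 \<in> qWeyl q P"
| gen_v: "vgen q P \<in> qWeyl q P"
| gen_Z: "mono 0 1 \<in> qWeyl q P"
| gen_Zinv: "mono 0 (-1) \<in> qWeyl q P"
| add: "x \<in> qWeyl q P \<Longrightarrow> y \<in> qWeyl q P \<Longrightarrow> x + y \<in> qWeyl q P"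
| scal: "x \<in> qWeyl q P \<Longrightarrow> smul c x \<in> qWeyl q P"
| mul: "x \<in> qWeyl q P \<Longrightarrow> y \<in> qWeyl q P \<Longrightarrow> mult q x y \<in> qWeyl q P"

definition grade :: "complex \<Rightarrow> (int \<Rightarrow> complex) \<Rightarrow> int \<Rightarrow> elt set" where
  "grade q P i = {a \<in> qWeyl q P.
      mult q (mult q (mono 0 1) a) (mono 0 (-1)) = smul (q powi (2 * i)) a}"

text \<open>The automorphism g_t: u \<mapsto> t u, v \<mapsto> t^-1 v, Z \<mapsto> Z.\<close>
definition gt :: "complex \<Rightarrow> elt \<Rightarrow> elt" where
  "gt t x = (\<lambda>(i,j). t powi i * x (i,j))"

definition linear_on :: "elt set \<Rightarrow> (elt \<Rightarrow> complex) \<Rightarrow> bool" where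
  "linear_on A T \<longleftrightarrow> (\<forall>x\<in>A. \<forall>y\<in>A. T (x + y) = T x + T y)
                    \<and> (\<forall>c. \<forall>x\<in>A. T (smul c x) = c * T x)"

definition twisted_trace :: "complex \<Rightarrow> (int \<Rightarrow> complex) \<Rightarrow> complex \<Rightarrow> (elt \<Rightarrow> complex) \<Rightarrow> bool" where
  "twisted_trace q P t T \<longleftrightarrow>
     (\<forall>a\<in>qWeyl q P. \<forall>b\<in>qWeyl q P. T (mult q a b) = T (mult q b (gt t a)))"

definition lspan :: "(int \<Rightarrow> complex) \<Rightarrow> nat" where
  "lspan P = nat (Max {j. P j \<noteq> 0} - Min {j. P j \<noteq> 0})"

end

(*
  The algebra is realised inside the skew Laurent ring C[Z, Z^-1][u, u^-1] with Z u = q^2 u Z,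
  so every element is a finite sum of homogeneous components u^i f_i(Z), each again in the
  algebra and lying in A_i.  Conjugation by Z acts on A_i by q^(2i), which is not 1 for i <> 0
  because |q| < 1; a twisted trace commutes with Z, hence kills A_i for i <> 0.  Conversely a
  functional killing these is determined by its values on A_0 = C[Z, Z^-1], and the trace
  identity only has to be checked on the generators u, v, Z, Z^-1.  For Z it is automatic; for
  u and v it reduces to T(P(q^-1 z) R(q^-1 z)) = t T(P(q z) R(q z)), using that the coefficient
  of u^-1 of every element is divisible by P(q^-1 Z).

  With tau_j = T(Z^j), the relation for R = z^m is the recurrence
  sum_c P_c (q^-(m+c) - t q^(m+c)) tau_(m+c) = 0 of length n = k - l.  The weight
  q^-j - t q^j vanishes for at most one j, so the extreme coefficients P_k, P_l let a solution be
  prescribed freely on a window of n consecutive indices containing that j and then be extended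
  uniquely in both directions: the twisted traces form an n-dimensional space.
*)

theory Submission
  imports Defs
begin

lemma sum_fun_apply: "(sum (f :: 'c \<Rightarrow> 'a \<Rightarrow> 'b::comm_monoid_add) S) p = (\<Sum>s\<in>S. f s p)"
  by (induction S rule: infinite_finite_induct) auto

lemma sum_int_interval_split_top:
  fixes g :: "int \<Rightarrow> 'a::comm_monoid_add"
  assumes "k - l = int n"
  shows "(\<Sum>c\<in>{l..k}. g c) = g k + (\<Sum>e\<in>{1..n}. g (k - int e))"
proof -
  have "{l..k} = insert k {l..<k}" using assms by auto
  then have "(\<Sum>c\<in>{l..k}. g c) = g k + (\<Sum>c\<in>{l..<k}. g c)" by simp
  also have "(\<Sum>c\<in>{l..<k}. g c) = (\<Sum>e\<in>{1..n}. g (k - int e))"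
    by (rule sum.reindex_bij_witness[of _ "\<lambda>e. k - int e" "\<lambda>c. nat (k - c)"]) (use assms in auto)
  finally show ?thesis .
qed

lemma sum_int_interval_split_bot:
  fixes g :: "int \<Rightarrow> 'a::comm_monoid_add"
  assumes "k - l = int n"
  shows "(\<Sum>c\<in>{l..k}. g c) = g l + (\<Sum>e\<in>{1..n}. g (l + int e))"
proof -
  have "{l..k} = insert l {l<..k}" using assms by auto
  then have "(\<Sum>c\<in>{l..k}. g c) = g l + (\<Sum>c\<in>{l<..k}. g c)" by simp
  also have "(\<Sum>c\<in>{l<..k}. g c) = (\<Sum>e\<in>{1..n}. g (l + int e))"
    by (rule sum.reindex_bij_witness[of _ "\<lambda>e. l + int e" "\<lambda>c. nat (c - l)"]) (use assms in auto)
  finally show ?thesis .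
qed

lemma powi_ne_one:
  fixes q :: complex
  assumes "0 < norm q" "norm q < 1" "k \<noteq> 0"
  shows "q powi k \<noteq> 1"
proof
  assume h: "q powi k = 1"
  have "norm q powi k = 1" using h by (metis norm_one norm_power_int)
  show False
  proof (cases "k > 0")
    case True
    then have "norm q powi k = norm q ^ nat k" by (simp add: power_int_def)
    also have "\<dots> < 1" using assms True by (subst power_less_one_iff) auto
    finally show False using \<open>norm q powi k = 1\<close> by simp
  next
    case False
    then have "k < 0" using assms by simp
    then have "norm q powi k = inverse (norm q ^ nat (-k))" by (simp add: power_int_def power_inverse)
    moreover have "norm q ^ nat (-k) < 1" using assms \<open>k < 0\<close> by (subst power_less_one_iff) auto
    moreover have "norm q ^ nat (-k) > 0" using assms by simp
    ultimately have "norm q powi k > 1" by (simp add: one_less_inverse)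
    then show False using \<open>norm q powi k = 1\<close> by simp
  qed
qed

section \<open>Finitely supported elements and the skew product\<close>

definition finsupp :: "elt \<Rightarrow> bool" where
  "finsupp x \<longleftrightarrow> finite (supp x)"

lemma mult_sum_superset:
  assumes "finite A" "supp x \<subseteq> A"
  shows "mult q x y (i,j) = (\<Sum>p\<in>A. x p * y (i - fst p, j - snd p) * q powi (2 * (i - fst p) * snd p))"
  unfolding mult_def by (simp, rule sum.mono_neutral_left[OF assms]) (simp add: supp_def)

lemma mult_mono_left: "mult q (mono a c) y (i,j) = y (i - a, j - c) * q powi (2 * (i - a) * c)"
  by (subst mult_sum_superset[of "{(a,c)}"]) (auto simp: supp_def mono_def)

lemma mult_mono_right:
  assumes "finsupp y"
  shows "mult q y (mono b d) (i,j) = y (i - b, j - d) * q powi (2 * b * (j - d))"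
proof -
  have "mult q y (mono b d) (i,j) = (\<Sum>p\<in>insert (i-b,j-d) (supp y).
     y p * mono b d (i - fst p, j - snd p) * q powi (2 * (i - fst p) * snd p))"
    by (rule mult_sum_superset) (use assms in \<open>auto simp: finsupp_def\<close>)
  also have "\<dots> = (\<Sum>p\<in>insert (i-b,j-d) (supp y).
     if p = (i-b,j-d) then y (i - b, j - d) * q powi (2 * b * (j - d)) else 0)"
    by (rule sum.cong) (auto simp: mono_def)
  also have "\<dots> = y (i - b, j - d) * q powi (2 * b * (j - d))"
    using assms unfolding finsupp_def by (simp add: sum.delta)
  finally show ?thesis .
qed

lemma supp_mult: "supp (mult q x y) \<subseteq> (\<lambda>(r,s). (fst r + fst s, snd r + snd s)) ` (supp x \<times> supp y)"
proof
  fix p assume pm: "p \<in> supp (mult q x y)"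
  obtain i j where p: "p = (i,j)" by (cases p)
  have "mult q x y (i,j) \<noteq> 0" using pm by (simp add: p supp_def)
  then have "(\<Sum>r\<in>supp x. x r * y (i - fst r, j - snd r) * q powi (2 * (i - fst r) * snd r)) \<noteq> 0"
    by (simp add: mult_def)
  then obtain r where r: "r \<in> supp x" "x r * y (i - fst r, j - snd r) * q powi (2 * (i - fst r) * snd r) \<noteq> 0"
    by (rule sum.not_neutral_contains_not_neutral)
  then have "(r, (i - fst r, j - snd r)) \<in> supp x \<times> supp y" by (simp add: supp_def)
  then show "p \<in> (\<lambda>(r,s). (fst r + fst s, snd r + snd s)) ` (supp x \<times> supp y)"
    by (rule rev_image_eqI) (simp add: p)
qed

lemma finsupp_mult: "finsupp x \<Longrightarrow> finsupp y \<Longrightarrow> finsupp (mult q x y)"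
  unfolding finsupp_def by (rule finite_subset[OF supp_mult]) auto

lemma finsupp_add: "finsupp x \<Longrightarrow> finsupp y \<Longrightarrow> finsupp (x + y)"
  unfolding finsupp_def supp_def by (rule finite_subset[of _ "{p. x p \<noteq> 0} \<union> {p. y p \<noteq> 0}"]) auto

lemma finsupp_smul: "finsupp x \<Longrightarrow> finsupp (smul c x)"
  unfolding finsupp_def supp_def smul_def by (rule finite_subset[of _ "{p. x p \<noteq> 0}"]) auto

lemma finsupp_mono: "finsupp (mono a b)"
  unfolding finsupp_def supp_def mono_def by (rule finite_subset[of _ "{(a,b)}"]) auto

lemma finsupp_sum: "finite S \<Longrightarrow> (\<And>s. s \<in> S \<Longrightarrow> finsupp (f s)) \<Longrightarrow> finsupp (sum f S)"
  by (induction S rule: finite_induct) (simp add: finsupp_def supp_def, simp add: finsupp_add)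

lemma supp_lp: "supp (lp f c) \<subseteq> (\<lambda>j. (0,j)) ` {j. f j \<noteq> 0}"
  unfolding supp_def lp_def by (auto split: if_splits)

lemma finsupp_lp: "finite {j. f j \<noteq> 0} \<Longrightarrow> finsupp (lp f c)"
  unfolding finsupp_def by (rule finite_subset[OF supp_lp]) (intro finite_imageI)

lemma vgen_eq: "vgen q P = (\<lambda>(i,j). if i = -1 then P j * inverse q powi j else 0)"
  by (rule ext) (auto simp: vgen_def mult_mono_left lp_def)

lemma mono_mult_mono: "mult q (mono a c) (mono b d) = smul (q powi (2 * b * c)) (mono (a+b) (c+d))"
  by (rule ext, clarify, simp only: mult_mono_left) (auto simp: mono_def smul_def)

lemma mult_one_left: "mult q (mono 0 0) x = x"
  by (rule ext, clarify) (simp add: mult_mono_left)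

lemma mult_one_right: "finsupp x \<Longrightarrow> mult q x (mono 0 0) = x"
  by (rule ext, clarify) (simp add: mult_mono_right)

lemma smul_one [simp]: "smul 1 x = x"
  by (simp add: smul_def)

lemma smul_zero [simp]: "smul 0 x = 0"
  by (simp add: smul_def fun_eq_iff)

lemma mult_add_left: "finsupp x \<Longrightarrow> finsupp x' \<Longrightarrow> mult q (x + x') y = mult q x y + mult q x' y"
proof (rule ext, clarify)
  fix i j :: int
  assume f: "finsupp x" "finsupp x'"
  let ?A = "supp x \<union> supp x'"
  have A: "finite ?A" using f unfolding finsupp_def by simp
  have s: "supp (x + x') \<subseteq> ?A" by (auto simp: supp_def)
  show "mult q (x + x') y (i,j) = (mult q x y + mult q x' y) (i,j)"
    unfolding plus_fun_apply mult_sum_superset[OF A s] mult_sum_superset[OF A Un_upper1] mult_sum_superset[OF A Un_upper2]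
    by (simp add: sum.distrib[symmetric] algebra_simps)
qed

lemma mult_add_right: "mult q x (y + y') = mult q x y + mult q x y'"
  by (rule ext) (simp add: mult_def split_def sum.distrib[symmetric] algebra_simps)

lemma mult_smul_left: "finsupp x \<Longrightarrow> mult q (smul c x) y = smul c (mult q x y)"
proof (rule ext, clarify)
  fix i j :: int
  assume f: "finsupp x"
  have A: "finite (supp x)" using f unfolding finsupp_def by simp
  have s: "supp (smul c x) \<subseteq> supp x" by (auto simp: supp_def smul_def)
  have "mult q (smul c x) y (i,j) = (\<Sum>p\<in>supp x. smul c x p * y (i - fst p, j - snd p) * q powi (2 * (i - fst p) * snd p))"
    by (rule mult_sum_superset[OF A s])
  also have "\<dots> = smul c (mult q x y) (i,j)"
    unfolding mult_sum_superset[OF A order_refl] smul_def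
    by (simp add: sum_distrib_left algebra_simps)
  finally show "mult q (smul c x) y (i,j) = smul c (mult q x y) (i,j)" .
qed

lemma mult_smul_right: "mult q x (smul c y) = smul c (mult q x y)"
  by (rule ext) (simp add: mult_def smul_def split_def sum_distrib_left algebra_simps)

lemma mult_zero_left: "mult q 0 y = 0"
  by (rule ext, clarify) (simp add: mult_def supp_def)

lemma mult_zero_right: "mult q x 0 = 0"
  by (rule ext, clarify) (simp add: mult_def)

lemma mult_sum_left:
  "finite S \<Longrightarrow> (\<And>s. s \<in> S \<Longrightarrow> finsupp (f s)) \<Longrightarrow> mult q (sum f S) y = (\<Sum>s\<in>S. mult q (f s) y)"
  by (induction S rule: finite_induct) (simp_all add: mult_zero_left mult_add_left finsupp_sum)

lemma mult_sum_right: "finite S \<Longrightarrow> mult q x (sum f S) = (\<Sum>s\<in>S. mult q x (f s))"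
proof (induction S rule: finite_induct)
  case (insert s S)
  then show ?case by (simp only: sum.insert[OF insert(1,2)] mult_add_right)
qed (simp only: sum.empty mult_zero_right)

lemma mult_mult_left_eq:
  assumes "finsupp x" "finsupp y"
  shows "mult q (mult q x y) z (i,j) = (\<Sum>r\<in>supp x. \<Sum>s\<in>supp y. x r * y s *
     z (i - fst r - fst s, j - snd r - snd s) *
     (q powi (2 * fst s * snd r) * q powi (2 * (i - fst r - fst s) * (snd r + snd s))))"
proof -
  define shift :: "int \<times> int \<Rightarrow> int \<times> int \<Rightarrow> int \<times> int"
    where "shift r s = (fst r + fst s, snd r + snd s)" for r s
  define D where "D = (\<lambda>(r,s). shift r s) ` (supp x \<times> supp y)"
  define G where "G r p = x r * y (fst p - fst r, snd p - snd r) * q powi (2 * (fst p - fst r) * snd r)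
       * (z (i - fst p, j - snd p) * q powi (2 * (i - fst p) * snd p))" for r p
  have fx: "finite (supp x)" and fy: "finite (supp y)" using assms by (auto simp: finsupp_def)
  then have fD: "finite D" by (simp add: D_def)
  have "mult q (mult q x y) z (i,j) =
     (\<Sum>p\<in>D. mult q x y p * z (i - fst p, j - snd p) * q powi (2 * (i - fst p) * snd p))"
    by (rule mult_sum_superset[OF fD]) (use supp_mult in \<open>simp add: D_def shift_def\<close>)
  also have "\<dots> = (\<Sum>p\<in>D. \<Sum>r\<in>supp x. G r p)"
  proof (rule sum.cong[OF refl])
    fix p :: "int \<times> int"
    show "mult q x y p * z (i - fst p, j - snd p) * q powi (2 * (i - fst p) * snd p) = (\<Sum>r\<in>supp x. G r p)"
      using mult_sum_superset[OF fx order_refl, of q y "fst p" "snd p"]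
      by (simp add: G_def sum_distrib_right mult.assoc)
  qed
  also have "\<dots> = (\<Sum>r\<in>supp x. \<Sum>p\<in>D. G r p)" by (rule sum.swap)
  also have "\<dots> = (\<Sum>r\<in>supp x. \<Sum>s\<in>supp y. G r (shift r s))"
  proof (rule sum.cong[OF refl])
    fix r assume r: "r \<in> supp x"
    have inj: "inj_on (shift r) (supp y)" by (rule inj_onI) (auto simp: shift_def prod_eq_iff)
    have "G r p = 0" if "p \<notin> shift r ` supp y" for p
      using that image_eqI[of p "shift r" "(fst p - fst r, snd p - snd r)"]
      by (auto simp: G_def supp_def shift_def)
    then have "(\<Sum>p\<in>D. G r p) = (\<Sum>p\<in>shift r ` supp y. G r p)"
      using r by (intro sum.mono_neutral_right[OF fD]) (auto simp: D_def)
    also have "\<dots> = (\<Sum>s\<in>supp y. G r (shift r s))" by (simp add: sum.reindex[OF inj])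
    finally show "(\<Sum>p\<in>D. G r p) = (\<Sum>s\<in>supp y. G r (shift r s))" .
  qed
  also have "\<dots> = (\<Sum>r\<in>supp x. \<Sum>s\<in>supp y. x r * y s *
     z (i - fst r - fst s, j - snd r - snd s) *
     (q powi (2 * fst s * snd r) * q powi (2 * (i - fst r - fst s) * (snd r + snd s))))"
    by (intro sum.cong refl) (simp add: G_def shift_def algebra_simps)
  finally show ?thesis .
qed

lemma mult_mult_right_eq:
  assumes "finsupp x" "finsupp y"
  shows "mult q x (mult q y z) (i,j) = (\<Sum>r\<in>supp x. \<Sum>s\<in>supp y. x r * y s *
     z (i - fst r - fst s, j - snd r - snd s) *
     (q powi (2 * (i - fst r - fst s) * snd s) * q powi (2 * (i - fst r) * snd r)))"
proof -
  have fx: "finite (supp x)" and fy: "finite (supp y)" using assms by (auto simp: finsupp_def)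
  show ?thesis
    unfolding mult_sum_superset[OF fx order_refl, of q "mult q y z"]
    by (intro sum.cong refl)
      (simp add: mult_sum_superset[OF fy order_refl] sum_distrib_left sum_distrib_right algebra_simps)
qed

lemma mult_assoc:
  assumes "finsupp x" "finsupp y" "q \<noteq> 0"
  shows "mult q (mult q x y) z = mult q x (mult q y z)"
proof (rule ext, clarify)
  fix i j :: int
  have "q powi a * q powi b = q powi c * q powi d" if "a + b = c + d" for a b c d
    using that assms(3) by (simp add: power_int_add[symmetric])
  then have "q powi (2 * fst s * snd r) * q powi (2 * (i - fst r - fst s) * (snd r + snd s)) =
      q powi (2 * (i - fst r - fst s) * snd s) * q powi (2 * (i - fst r) * snd r)" for r s :: "int \<times> int"
    by (simp add: algebra_simps)
  then show "mult q (mult q x y) z (i,j) = mult q x (mult q y z) (i,j)"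
    unfolding mult_mult_left_eq[OF assms(1,2)] mult_mult_right_eq[OF assms(1,2)] by simp
qed

lemma supp_gt: "supp (gt t x) \<subseteq> supp x"
  by (auto simp: supp_def gt_def)

lemma gt_mult:
  assumes fx: "finsupp x" and t0: "t \<noteq> 0"
  shows "gt t (mult q x y) = mult q (gt t x) (gt t y)"
proof (rule ext, clarify)
  fix i j :: int
  have fA: "finite (supp x)" using fx by (simp add: finsupp_def)
  have "mult q (gt t x) (gt t y) (i,j) = (\<Sum>p\<in>supp x. gt t x p * gt t y (i - fst p, j - snd p) * q powi (2 * (i - fst p) * snd p))"
    by (rule mult_sum_superset[OF fA supp_gt])
  also have "\<dots> = (\<Sum>p\<in>supp x. t powi i * (x p * y (i - fst p, j - snd p) * q powi (2 * (i - fst p) * snd p)))"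
  proof (rule sum.cong[OF refl])
    fix p :: "int \<times> int"
    have "t powi (fst p) * t powi (i - fst p) = t powi i"
      using t0 by (simp add: power_int_add[symmetric])
    then show "gt t x p * gt t y (i - fst p, j - snd p) * q powi (2 * (i - fst p) * snd p) =
      t powi i * (x p * y (i - fst p, j - snd p) * q powi (2 * (i - fst p) * snd p))"
      by (cases p) (simp add: gt_def algebra_simps)
  qed
  also have "\<dots> = gt t (mult q x y) (i,j)"
    by (simp add: gt_def mult_sum_superset[OF fA order_refl] sum_distrib_left)
  finally show "gt t (mult q x y) (i,j) = mult q (gt t x) (gt t y) (i,j)" ..
qed

lemma gt_add: "gt t (x + y) = gt t x + gt t y"
  by (rule ext) (simp add: gt_def split_def algebra_simps)

lemma gt_smul: "gt t (smul c x) = smul c (gt t x)"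
  by (rule ext) (simp add: gt_def smul_def split_def)

lemma gt_mono: "gt t (mono a b) = smul (t powi a) (mono a b)"
  by (rule ext) (auto simp: gt_def smul_def mono_def split_def)

lemma gt_vgen: "gt t (vgen q P) = smul (t powi (-1)) (vgen q P)"
  by (rule ext) (auto simp: gt_def smul_def vgen_eq split_def)

definition component :: "elt \<Rightarrow> int \<Rightarrow> elt" where
  "component x a = (\<lambda>(i,j). if i = a then x (i,j) else 0)"

lemma component_apply: "component x a (i,j) = (if i = a then x (i,j) else 0)"
  by (simp add: component_def)

lemma finsupp_component: "finsupp x \<Longrightarrow> finsupp (component x a)"
  unfolding finsupp_def supp_def by (rule finite_subset[of _ "{p. x p \<noteq> 0}"]) (auto simp: component_def split: if_splits)

lemma component_add: "component (x + y) a = component x a + component y a"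
  by (rule ext) (simp add: component_def split_def)

lemma component_smul: "component (smul c x) a = smul c (component x a)"
  by (rule ext) (simp add: component_def smul_def split_def)

lemma component_zero: "component 0 a = 0"
  by (rule ext) (simp add: component_def split_def)

lemma component_sum: "finite S \<Longrightarrow> component (sum f S) a = (\<Sum>s\<in>S. component (f s) a)"
proof (induction S rule: finite_induct)
  case empty show ?case by (simp only: sum.empty component_zero)
next
  case (insert s S)
  show ?case by (simp only: sum.insert[OF insert(1,2)] component_add insert(3))
qed

lemma sum_component:
  assumes "finite I" "fst ` supp x \<subseteq> I"
  shows "x = (\<Sum>a\<in>I. component x a)"
proof (rule ext, clarify)
  fix i j :: int
  have "(\<Sum>a\<in>I. component x a) (i,j) = (\<Sum>a\<in>I. if a = i then x (i,j) else 0)"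
    unfolding sum_fun_apply by (rule sum.cong) (auto simp: component_def)
  also have "\<dots> = x (i,j)"
  proof (cases "i \<in> I")
    case True then show ?thesis using assms(1) by (simp add: sum.delta')
  next
    case False
    then have "(i,j) \<notin> supp x" using assms(2) by force
    then show ?thesis using False assms(1) by (simp add: sum.delta' supp_def)
  qed
  finally show "x (i,j) = (\<Sum>a\<in>I. component x a) (i,j)" ..
qed

lemma component_concentrated:
  assumes "\<And>i j. i \<noteq> b \<Longrightarrow> x (i,j) = 0"
  shows "component x a = (if a = b then x else 0)"
  by (rule ext) (auto simp: component_def split_def assms)

lemma mult_components_off_degree:
  assumes "i \<noteq> a + b"
  shows "mult q (component x a) (component y b) (i,j) = 0"
  using assms by (auto simp: mult_def supp_def component_apply intro!: sum.neutral)

lemma component_mult_components: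
  "component (mult q (component x a) (component y b)) c = (if c = a + b then mult q (component x a) (component y b) else 0)"
  by (rule component_concentrated) (rule mult_components_off_degree)

lemma component_mono: "component (mono b d) a = (if a = b then mono b d else 0)"
  by (rule component_concentrated) (simp add: mono_def)

section \<open>Laurent polynomials\<close>

definition lfinite :: "(int \<Rightarrow> complex) \<Rightarrow> bool" where "lfinite f \<longleftrightarrow> finite {j. f j \<noteq> 0}"

definition conv :: "(int \<Rightarrow> complex) \<Rightarrow> (int \<Rightarrow> complex) \<Rightarrow> int \<Rightarrow> complex" where
  "conv f g = (\<lambda>j. \<Sum>k\<in>{k. f k \<noteq> 0}. f k * g (j - k))"

definition dilate :: "(int \<Rightarrow> complex) \<Rightarrow> complex \<Rightarrow> int \<Rightarrow> complex" where
  "dilate f \<mu> = (\<lambda>j. f j * \<mu> powi j)"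

definition row :: "elt \<Rightarrow> int \<Rightarrow> int \<Rightarrow> complex" where
  "row x a = (\<lambda>j. x (a,j))"

definition lunit :: "int \<Rightarrow> complex" where "lunit = (\<lambda>j. if j = 0 then 1 else 0)"

definition ldvd :: "(int \<Rightarrow> complex) \<Rightarrow> (int \<Rightarrow> complex) \<Rightarrow> bool" where
  "ldvd p f \<longleftrightarrow> (\<exists>s. lfinite s \<and> f = conv p s)"

lemma conv_sum_superset:
  assumes "finite A" "{k. f k \<noteq> 0} \<subseteq> A"
  shows "conv f g j = (\<Sum>k\<in>A. f k * g (j - k))"
  unfolding conv_def by (rule sum.mono_neutral_left[OF assms]) auto

lemma lfinite_conv: "lfinite f \<Longrightarrow> lfinite g \<Longrightarrow> lfinite (conv f g)"
proof -
  assume ff: "lfinite f" and fg: "lfinite g"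
  have "{j. conv f g j \<noteq> 0} \<subseteq> (\<lambda>(a,b). a + b) ` ({k. f k \<noteq> 0} \<times> {k. g k \<noteq> 0})"
  proof
    fix j assume "j \<in> {j. conv f g j \<noteq> 0}"
    then have "(\<Sum>k\<in>{k. f k \<noteq> 0}. f k * g (j - k)) \<noteq> 0" by (simp add: conv_def)
    then obtain k where k: "k \<in> {k. f k \<noteq> 0}" "f k * g (j - k) \<noteq> 0"
      by (rule sum.not_neutral_contains_not_neutral)
    have "j = (\<lambda>(a,b). a + b) (k, j - k)" by simp
    moreover have "(k, j - k) \<in> {k. f k \<noteq> 0} \<times> {k. g k \<noteq> 0}" using k by simp
    ultimately show "j \<in> (\<lambda>(a,b). a + b) ` ({k. f k \<noteq> 0} \<times> {k. g k \<noteq> 0})" by blast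
  qed
  moreover have "finite ((\<lambda>(a,b). a + b) ` ({k. f k \<noteq> 0} \<times> {k. g k \<noteq> 0}))"
    using ff fg unfolding lfinite_def by (intro finite_imageI finite_cartesian_product)
  ultimately show ?thesis unfolding lfinite_def by (rule finite_subset)
qed

lemma lfinite_dilate: "lfinite f \<Longrightarrow> lfinite (dilate f \<mu>)"
  unfolding lfinite_def dilate_def by (rule finite_subset[of _ "{j. f j \<noteq> 0}"]) auto

lemma lfinite_add: "lfinite f \<Longrightarrow> lfinite g \<Longrightarrow> lfinite (f + g)"
  unfolding lfinite_def by (rule finite_subset[of _ "{j. f j \<noteq> 0} \<union> {j. g j \<noteq> 0}"]) auto

lemma lfinite_row: "finsupp x \<Longrightarrow> lfinite (row x a)"
  unfolding lfinite_def finsupp_def row_def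
  by (rule finite_subset[of _ "snd ` supp x"]) (auto simp: supp_def image_iff intro: exI[of _ a])

lemma lfinite_zero: "lfinite 0" by (simp add: lfinite_def)

lemma lfinite_lunit: "lfinite lunit" unfolding lfinite_def lunit_def by (rule finite_subset[of _ "{0}"]) auto

lemma lfinite_cmult: "lfinite f \<Longrightarrow> lfinite (\<lambda>j. c * f j)"
  unfolding lfinite_def by (rule finite_subset[of _ "{j. f j \<noteq> 0}"]) auto

lemma lfinite_sum: "finite S \<Longrightarrow> (\<And>s. s \<in> S \<Longrightarrow> lfinite (f s)) \<Longrightarrow> lfinite (sum f S)"
proof (induction S rule: finite_induct)
  case empty show ?case by (simp only: sum.empty lfinite_zero)
next
  case (insert s S) then show ?case by (simp only: sum.insert[OF insert(1,2)]) (intro lfinite_add; auto)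
qed

lemma dilate_dilate: "dilate (dilate f a) b = dilate f (a * b)"
  by (rule ext) (simp add: dilate_def power_int_mult_distrib)

lemma dilate_one: "dilate f 1 = f" by (rule ext) (simp add: dilate_def)

lemma dilate_conv:
  assumes "lfinite f" "\<mu> \<noteq> 0"
  shows "dilate (conv f g) \<mu> = conv (dilate f \<mu>) (dilate g \<mu>)"
proof (rule ext)
  fix j
  have A: "finite {k. f k \<noteq> 0}" using assms by (simp add: lfinite_def)
  have "conv (dilate f \<mu>) (dilate g \<mu>) j = (\<Sum>k\<in>{k. f k \<noteq> 0}. dilate f \<mu> k * dilate g \<mu> (j - k))"
    by (rule conv_sum_superset[OF A]) (auto simp: dilate_def)
  also have "\<dots> = (\<Sum>k\<in>{k. f k \<noteq> 0}. (f k * g (j - k)) * \<mu> powi j)"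
  proof (rule sum.cong[OF refl])
    fix k
    have "\<mu> powi k * \<mu> powi (j - k) = \<mu> powi j" using assms(2) by (simp add: power_int_add[symmetric])
    then show "dilate f \<mu> k * dilate g \<mu> (j - k) = (f k * g (j - k)) * \<mu> powi j"
      by (simp add: dilate_def algebra_simps)
  qed
  also have "\<dots> = dilate (conv f g) \<mu> j" by (simp add: dilate_def conv_def sum_distrib_right)
  finally show "dilate (conv f g) \<mu> j = conv (dilate f \<mu>) (dilate g \<mu>) j" ..
qed

lemma lp_apply: "lp f c (i,j) = (if i = 0 then dilate f c j else 0)"
  by (simp add: lp_def dilate_def)

lemma row_lp: "row (lp f c) 0 = dilate f c"
  by (rule ext) (simp add: row_def lp_apply)

lemma mult_lp_left:
  assumes ff: "lfinite f" and fy: "finsupp y"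
  shows "mult q (lp f c) y (i,j) = conv (dilate f (c * q powi (2*i))) (row y i) j"
proof -
  define K where "K = {k. f k \<noteq> 0}"
  have fK: "finite K" using ff by (simp add: K_def lfinite_def)
  have "mult q (lp f c) y (i,j) = (\<Sum>p\<in>Pair 0 ` K. lp f c p * y (i - fst p, j - snd p) * q powi (2 * (i - fst p) * snd p))"
    by (rule mult_sum_superset) (use fK supp_lp in \<open>auto simp: K_def\<close>)
  also have "\<dots> = (\<Sum>k\<in>K. f k * c powi k * y (i, j - k) * q powi (2 * i * k))"
    by (subst sum.reindex) (auto simp: inj_on_def lp_def)
  also have "\<dots> = conv (dilate f (c * q powi (2*i))) (row y i) j"
    by (subst conv_sum_superset[OF fK]) (auto simp: K_def dilate_def row_def power_int_mult_distrib power_int_mult[symmetric] algebra_simps intro!: sum.cong)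
  finally show ?thesis .
qed

lemma mult_lp_right:
  assumes fy: "finsupp y"
  shows "mult q y (lp f c) (i,j) = conv (row y i) (dilate f c) j"
proof -
  define K where "K = {k. y (i,k) \<noteq> 0}"
  have fK: "finite K" using lfinite_row[OF fy, of i] by (simp add: K_def lfinite_def row_def)
  have fS: "finite (supp y)" using fy by (simp add: finsupp_def)
  define g where "g = (\<lambda>p. y p * lp f c (i - fst p, j - snd p) * q powi (2 * (i - fst p) * snd p))"
  have "mult q y (lp f c) (i,j) = sum g (supp y \<union> Pair i ` K)"
    unfolding g_def by (rule mult_sum_superset) (use fK fS in auto)
  also have "\<dots> = sum g (Pair i ` K)"
  proof (rule sum.mono_neutral_right)
    show "finite (supp y \<union> Pair i ` K)" using fK fS by simp
    show "\<forall>p\<in>supp y \<union> Pair i ` K - Pair i ` K. g p = 0"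
    proof
      fix p assume p: "p \<in> supp y \<union> Pair i ` K - Pair i ` K"
      obtain a b where ab: "p = (a,b)" by (cases p)
      show "g p = 0"
      proof (cases "a = i")
        case True
        then have "b \<notin> K" using p ab by auto
        then show ?thesis using True ab by (simp add: g_def K_def)
      next
        case False then show ?thesis using ab by (simp add: g_def lp_def)
      qed
    qed
  qed simp
  also have "\<dots> = (\<Sum>k\<in>K. y (i,k) * dilate f c (j - k))"
    by (subst sum.reindex) (auto simp: inj_on_def g_def lp_def dilate_def)
  also have "\<dots> = conv (row y i) (dilate f c) j"
    by (simp add: conv_def row_def K_def)
  finally show ?thesis .
qed

lemma mult_lp_lp:
  assumes ff: "lfinite f" and fg: "lfinite g" and c0: "c \<noteq> 0"
  shows "mult q (lp f c) (lp g c) = lp (conv f g) c"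
proof (rule ext, clarify)
  fix i j :: int
  have fy: "finsupp (lp g c)" using fg by (simp add: finsupp_lp lfinite_def)
  show "mult q (lp f c) (lp g c) (i,j) = lp (conv f g) c (i,j)"
  proof (cases "i = 0")
    case True
    then show ?thesis unfolding mult_lp_left[OF ff fy] True row_lp lp_apply
      using dilate_conv[OF ff c0] by simp
  next
    case False
    have "row (lp g c) i = 0" using False by (auto simp: row_def lp_apply)
    then have "conv (dilate f (c * q powi (2*i))) (row (lp g c) i) j = 0" by (simp add: conv_def)
    then show ?thesis unfolding mult_lp_left[OF ff fy] using False by (simp add: lp_apply)
  qed
qed

lemma lp_inj: "lp f 1 = lp g 1 \<Longrightarrow> f = g"
proof (rule ext)
  fix j assume "lp f 1 = lp g 1"
  then have "lp f 1 (0,j) = lp g 1 (0,j)" by simp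
  then show "f j = g j" by (simp add: lp_def)
qed

lemma conv_assoc:
  assumes "lfinite f" "lfinite g" "lfinite h"
  shows "conv (conv f g) h = conv f (conv g h)"
proof (rule lp_inj)
  have fl: "\<And>u. lfinite u \<Longrightarrow> finsupp (lp u 1)" by (simp add: finsupp_lp lfinite_def)
  have "lp (conv (conv f g) h) 1 = mult 1 (lp (conv f g) 1) (lp h 1)"
    using assms by (simp add: mult_lp_lp lfinite_conv)
  also have "\<dots> = mult 1 (mult 1 (lp f 1) (lp g 1)) (lp h 1)"
    using assms by (simp add: mult_lp_lp)
  also have "\<dots> = mult 1 (lp f 1) (mult 1 (lp g 1) (lp h 1))"
    using assms by (intro mult_assoc fl) auto
  also have "\<dots> = lp (conv f (conv g h)) 1"
    using assms by (simp add: mult_lp_lp lfinite_conv)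
  finally show "lp (conv (conv f g) h) 1 = lp (conv f (conv g h)) 1" .
qed

lemma conv_comm:
  assumes ff: "lfinite f" and fg: "lfinite g"
  shows "conv f g = conv g f"
proof (rule ext)
  fix j
  define U where "U = {k. f k \<noteq> 0} \<union> (\<lambda>m. j - m) ` {k. g k \<noteq> 0}"
  define U' where "U' = {k. g k \<noteq> 0} \<union> (\<lambda>m. j - m) ` {k. f k \<noteq> 0}"
  have fU: "finite U" "finite U'" using ff fg by (auto simp: U_def U'_def lfinite_def)
  have "conv f g j = (\<Sum>k\<in>U. f k * g (j - k))" by (rule conv_sum_superset[OF fU(1)]) (auto simp: U_def)
  also have "\<dots> = (\<Sum>m\<in>U'. g m * f (j - m))"
    by (rule sum.reindex_bij_witness[of _ "\<lambda>m. j - m" "\<lambda>k. j - k"]) (auto simp: U_def U'_def image_iff)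
  also have "\<dots> = conv g f j" by (rule conv_sum_superset[OF fU(2), symmetric]) (auto simp: U'_def)
  finally show "conv f g j = conv g f j" .
qed

lemma conv_add_right: "conv f (g + h) = conv f g + conv f h"
  by (rule ext) (simp add: conv_def sum.distrib algebra_simps)

lemma conv_zero_right: "conv f 0 = 0"
  by (rule ext) (simp add: conv_def)

lemma conv_cmult_right: "conv f (\<lambda>j. c * g j) = (\<lambda>j. c * conv f g j)"
  by (rule ext) (simp add: conv_def sum_distrib_left algebra_simps)

lemma conv_lunit: "lfinite f \<Longrightarrow> conv f lunit = f"
proof (rule ext)
  fix j assume ff: "lfinite f"
  have "conv f lunit j = (\<Sum>k\<in>{k. f k \<noteq> 0}. if k = j then f j else 0)"
    unfolding conv_def by (rule sum.cong) (auto simp: lunit_def)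
  also have "\<dots> = f j" using ff by (simp add: sum.delta' lfinite_def)
  finally show "conv f lunit j = f j" .
qed

lemma ldvd_zero: "ldvd p 0"
  unfolding ldvd_def using lfinite_zero conv_zero_right by metis

lemma ldvd_self: "lfinite p \<Longrightarrow> ldvd p p"
  unfolding ldvd_def using lfinite_lunit conv_lunit by metis

lemma ldvd_add: "ldvd p f \<Longrightarrow> ldvd p g \<Longrightarrow> ldvd p (f + g)"
proof -
  assume "ldvd p f" "ldvd p g"
  then obtain s s' where s: "lfinite s" "f = conv p s" "lfinite s'" "g = conv p s'" unfolding ldvd_def by blast
  then have "f + g = conv p (s + s')" by (simp add: conv_add_right)
  moreover have "lfinite (s + s')" using s by (intro lfinite_add)
  ultimately show ?thesis unfolding ldvd_def by blast
qed

lemma ldvd_cmult: "ldvd p f \<Longrightarrow> ldvd p (\<lambda>j. c * f j)"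
proof -
  assume "ldvd p f"
  then obtain s where s: "lfinite s" "f = conv p s" unfolding ldvd_def by blast
  then have "(\<lambda>j. c * f j) = conv p (\<lambda>j. c * s j)" by (simp add: conv_cmult_right)
  moreover have "lfinite (\<lambda>j. c * s j)" using s by (intro lfinite_cmult)
  ultimately show ?thesis unfolding ldvd_def by blast
qed

lemma ldvd_sum: "finite S \<Longrightarrow> (\<And>s. s \<in> S \<Longrightarrow> ldvd p (f s)) \<Longrightarrow> ldvd p (sum f S)"
proof (induction S rule: finite_induct)
  case empty show ?case by (simp only: sum.empty ldvd_zero)
next
  case (insert s S) then show ?case by (simp only: sum.insert[OF insert(1,2)]) (intro ldvd_add; auto)
qed

lemma ldvd_conv_right: "lfinite p \<Longrightarrow> lfinite g \<Longrightarrow> ldvd p f \<Longrightarrow> ldvd p (conv f g)"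
proof -
  assume fp: "lfinite p" and fg: "lfinite g" and "ldvd p f"
  then obtain s where s: "lfinite s" "f = conv p s" unfolding ldvd_def by blast
  then have "conv f g = conv p (conv s g)" using fp fg by (simp add: conv_assoc)
  moreover have "lfinite (conv s g)" using s fg by (intro lfinite_conv)
  ultimately show ?thesis unfolding ldvd_def by blast
qed

lemma ldvd_conv_left: "lfinite p \<Longrightarrow> lfinite g \<Longrightarrow> ldvd p f \<Longrightarrow> ldvd p (conv g f)"
proof -
  assume fp: "lfinite p" and fg: "lfinite g" and "ldvd p f"
  then obtain s where s: "lfinite s" "f = conv p s" unfolding ldvd_def by blast
  have "conv g f = conv (conv g p) s" using s fp fg by (simp add: conv_assoc)
  also have "\<dots> = conv (conv p g) s" using fp fg by (simp add: conv_comm[of g p])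
  also have "\<dots> = conv p (conv g s)" using s fp fg by (simp add: conv_assoc)
  finally have "conv g f = conv p (conv g s)" .
  moreover have "lfinite (conv g s)" using s fg by (intro lfinite_conv)
  ultimately show ?thesis unfolding ldvd_def by blast
qed

lemma ldvd_dilate: "lfinite p \<Longrightarrow> \<mu> \<noteq> 0 \<Longrightarrow> ldvd p f \<Longrightarrow> ldvd (dilate p \<mu>) (dilate f \<mu>)"
proof -
  assume fp: "lfinite p" and m: "\<mu> \<noteq> 0" and "ldvd p f"
  then obtain s where s: "lfinite s" "f = conv p s" unfolding ldvd_def by blast
  then have "dilate f \<mu> = conv (dilate p \<mu>) (dilate s \<mu>)" using fp m by (simp add: dilate_conv)
  moreover have "lfinite (dilate s \<mu>)" using s by (intro lfinite_dilate)
  ultimately show ?thesis unfolding ldvd_def by blast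
qed

lemma row_add: "row (x + y) a = row x a + row y a" by (rule ext) (simp add: row_def)

lemma row_smul: "row (smul c x) a = (\<lambda>j. c * row x a j)" by (rule ext) (simp add: row_def smul_def)

lemma row_mult:
  assumes fx: "finsupp x" and fy: "finsupp y"
  shows "row (mult q x y) i = (\<Sum>a\<in>fst ` supp x. conv (dilate (row x a) (q powi (2*(i-a)))) (row y (i-a)))"
proof (rule ext)
  fix j
  define I where "I = fst ` supp x"
  define K where "K = snd ` supp x"
  have fI: "finite I" and fK: "finite K" using fx by (auto simp: I_def K_def finsupp_def)
  have sub: "supp x \<subseteq> I \<times> K" by (force simp: I_def K_def)
  have "row (mult q x y) i j = (\<Sum>p\<in>I \<times> K. x p * y (i - fst p, j - snd p) * q powi (2 * (i - fst p) * snd p))"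
    unfolding row_def by (rule mult_sum_superset) (use fI fK sub in auto)
  also have "\<dots> = (\<Sum>a\<in>I. \<Sum>c\<in>K. x (a,c) * y (i - a, j - c) * q powi (2 * (i - a) * c))"
    by (subst sum.cartesian_product) (simp add: split_def)
  also have "\<dots> = (\<Sum>a\<in>I. conv (dilate (row x a) (q powi (2*(i-a)))) (row y (i-a)) j)"
  proof (rule sum.cong[OF refl])
    fix a assume "a \<in> I"
    have "conv (dilate (row x a) (q powi (2*(i-a)))) (row y (i-a)) j =
        (\<Sum>c\<in>K. dilate (row x a) (q powi (2*(i-a))) c * row y (i-a) (j - c))"
    proof (rule conv_sum_superset[OF fK], rule subsetI)
      fix c assume "c \<in> {k. dilate (row x a) (q powi (2*(i-a))) k \<noteq> 0}"
      then have "(a,c) \<in> supp x" by (simp add: dilate_def row_def supp_def)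
      then show "c \<in> K" unfolding K_def by force
    qed
    also have "\<dots> = (\<Sum>c\<in>K. x (a,c) * y (i - a, j - c) * q powi (2 * (i - a) * c))"
      by (rule sum.cong[OF refl]) (simp add: dilate_def row_def power_int_mult[symmetric] algebra_simps)
    finally show "(\<Sum>c\<in>K. x (a,c) * y (i - a, j - c) * q powi (2 * (i - a) * c)) =
        conv (dilate (row x a) (q powi (2*(i-a)))) (row y (i-a)) j" ..
  qed
  also have "\<dots> = (\<Sum>a\<in>I. conv (dilate (row x a) (q powi (2*(i-a)))) (row y (i-a))) j"
    by (simp add: sum_fun_apply)
  finally show "row (mult q x y) i j = (\<Sum>a\<in>fst ` supp x. conv (dilate (row x a) (q powi (2*(i-a)))) (row y (i-a))) j"
    by (simp add: I_def)
qed

definition pairing :: "(int \<Rightarrow> complex) \<Rightarrow> (int \<Rightarrow> complex) \<Rightarrow> complex" where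
  "pairing \<tau> f = (\<Sum>j\<in>{j. f j \<noteq> 0}. f j * \<tau> j)"

lemma pairing_superset:
  assumes "finite A" "{j. f j \<noteq> 0} \<subseteq> A"
  shows "pairing \<tau> f = (\<Sum>j\<in>A. f j * \<tau> j)"
  unfolding pairing_def by (rule sum.mono_neutral_left[OF assms]) auto

lemma pairing_add:
  assumes "lfinite f" "lfinite g"
  shows "pairing \<tau> (f + g) = pairing \<tau> f + pairing \<tau> g"
proof -
  let ?A = "{j. f j \<noteq> 0} \<union> {j. g j \<noteq> 0}"
  have fA: "finite ?A" using assms by (simp add: lfinite_def)
  show ?thesis
    by (subst (1 2 3) pairing_superset[OF fA]) (auto simp: sum.distrib algebra_simps)
qed

lemma pairing_cmult:
  assumes "lfinite f"
  shows "pairing \<tau> (\<lambda>j. c * f j) = c * pairing \<tau> f"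
proof -
  have fA: "finite {j. f j \<noteq> 0}" using assms by (simp add: lfinite_def)
  show ?thesis
    by (subst (1 2) pairing_superset[OF fA]) (auto simp: sum_distrib_left algebra_simps)
qed

lemma pairing_zero: "pairing \<tau> 0 = 0" by (simp add: pairing_def)

lemma pairing_sum: "finite S \<Longrightarrow> (\<And>s. s \<in> S \<Longrightarrow> lfinite (f s)) \<Longrightarrow> pairing \<tau> (sum f S) = (\<Sum>s\<in>S. pairing \<tau> (f s))"
proof (induction S rule: finite_induct)
  case empty show ?case by (simp only: sum.empty pairing_zero)
next
  case (insert s S)
  have "pairing \<tau> (sum f (insert s S)) = pairing \<tau> (f s + sum f S)" by (simp only: sum.insert[OF insert(1,2)])
  also have "\<dots> = pairing \<tau> (f s) + pairing \<tau> (sum f S)"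
    using insert by (intro pairing_add lfinite_sum) auto
  also have "\<dots> = pairing \<tau> (f s) + (\<Sum>s\<in>S. pairing \<tau> (f s))" using insert by simp
  also have "\<dots> = (\<Sum>s\<in>insert s S. pairing \<tau> (f s))" by (simp add: sum.insert[OF insert(1,2)])
  finally show ?case .
qed

lemma pairing_indicator: "pairing \<tau> (\<lambda>j. if j = m then 1 else 0) = \<tau> m"
  by (subst pairing_superset[of "{m}"]) auto

lemma pairing_lincomb_left:
  shows "pairing (\<lambda>j. \<Sum>s\<in>S. c s * g s j) f = (\<Sum>s\<in>S. c s * pairing (g s) f)"
  unfolding pairing_def by (simp add: sum_distrib_left sum.swap[of _ S] algebra_simps)

section \<open>The algebra and linear functionals on it\<close>

lemma finsupp_vgen: "finite {j. P j \<noteq> 0} \<Longrightarrow> finsupp (vgen q P)"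
  unfolding vgen_def by (intro finsupp_mult finsupp_mono finsupp_lp)

lemma qWeyl_zero: "0 \<in> qWeyl q P"
  using qWeyl.scal[OF qWeyl.gen_one, where c=0] by simp

lemma qWeyl_diff: "x \<in> qWeyl q P \<Longrightarrow> y \<in> qWeyl q P \<Longrightarrow> x - y \<in> qWeyl q P"
proof -
  assume "x \<in> qWeyl q P" "y \<in> qWeyl q P"
  then have "x + smul (-1) y \<in> qWeyl q P" by (intro qWeyl.add qWeyl.scal)
  moreover have "x + smul (-1) y = x - y" by (simp add: smul_def fun_eq_iff)
  ultimately show ?thesis by simp
qed

lemma qWeyl_sum: "finite S \<Longrightarrow> (\<And>s. s \<in> S \<Longrightarrow> f s \<in> qWeyl q P) \<Longrightarrow> sum f S \<in> qWeyl q P"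
  by (induction S rule: finite_induct) (auto intro: qWeyl.add qWeyl_zero)

lemma qWeyl_mono0: "mono 0 j \<in> qWeyl q P"
proof (induction j rule: int_induct[where k=0])
  case base show ?case by (rule qWeyl.gen_one)
next
  case (step1 i)
  have "mult q (mono 0 i) (mono 0 1) = mono 0 (i+1)"
    by (simp add: mono_mult_mono smul_def)
  with step1 qWeyl.gen_Z show ?case by (metis qWeyl.mul)
next
  case (step2 i)
  have "mult q (mono 0 i) (mono 0 (-1)) = mono 0 (i - 1)"
    by (simp add: mono_mult_mono smul_def)
  with step2 qWeyl.gen_Zinv show ?case by (metis qWeyl.mul)
qed

lemma lp_as_sum:
  assumes "finite {j. f j \<noteq> 0}"
  shows "lp f c = (\<Sum>j\<in>{j. f j \<noteq> 0}. smul (f j * c powi j) (mono 0 j))"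
proof (rule ext, clarify)
  fix i j :: int
  have "(\<Sum>k\<in>{j. f j \<noteq> 0}. smul (f k * c powi k) (mono 0 k)) (i,j) =
        (\<Sum>k\<in>{j. f j \<noteq> 0}. if k = j then (if i = 0 then f j * c powi j else 0) else 0)"
    unfolding sum_fun_apply by (rule sum.cong) (auto simp: smul_def mono_def)
  also have "\<dots> = lp f c (i,j)"
    using assms by (simp add: sum.delta lp_def)
  finally show "lp f c (i,j) = (\<Sum>k\<in>{j. f j \<noteq> 0}. smul (f k * c powi k) (mono 0 k)) (i,j)" ..
qed

lemma qWeyl_lp: "finite {j. f j \<noteq> 0} \<Longrightarrow> lp f c \<in> qWeyl q P"
  by (subst lp_as_sum) (auto intro!: qWeyl_sum qWeyl.scal qWeyl_mono0)

lemma linear_on_add: "linear_on (qWeyl q P) T \<Longrightarrow> x \<in> qWeyl q P \<Longrightarrow> y \<in> qWeyl q P \<Longrightarrow> T (x + y) = T x + T y"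
  unfolding linear_on_def by blast

lemma linear_on_smul: "linear_on (qWeyl q P) T \<Longrightarrow> x \<in> qWeyl q P \<Longrightarrow> T (smul c x) = c * T x"
  unfolding linear_on_def by blast

lemma linear_on_zero:
  assumes "linear_on (qWeyl q P) T"
  shows "T 0 = 0"
  using linear_on_smul[OF assms qWeyl.gen_one, of 0] by simp

lemma linear_on_diff: "linear_on (qWeyl q P) T \<Longrightarrow> x \<in> qWeyl q P \<Longrightarrow> y \<in> qWeyl q P \<Longrightarrow> T (x - y) = T x - T y"
proof -
  assume l: "linear_on (qWeyl q P) T" and x: "x \<in> qWeyl q P" and y: "y \<in> qWeyl q P"
  have e: "x - y = x + smul (-1) y" by (simp add: smul_def fun_eq_iff)
  have "T (x - y) = T x + T (smul (-1) y)" unfolding e by (rule linear_on_add[OF l x qWeyl.scal[OF y]])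
  then show ?thesis using linear_on_smul[OF l y] by simp
qed

lemma linear_on_sum: assumes l: "linear_on (qWeyl q P) T"
  shows "finite S \<Longrightarrow> (\<And>s. s \<in> S \<Longrightarrow> f s \<in> qWeyl q P)
   \<Longrightarrow> T (sum f S) = (\<Sum>s\<in>S. T (f s))"
proof (induction S rule: finite_induct)
  case empty show ?case by (simp only: sum.empty linear_on_zero[OF l])
next
  case (insert s S)
  have "T (sum f (insert s S)) = T (f s + sum f S)" by (simp only: sum.insert[OF insert(1,2)])
  also have "\<dots> = T (f s) + T (sum f S)" using insert by (intro linear_on_add[OF l] qWeyl_sum) auto
  also have "\<dots> = T (f s) + (\<Sum>s\<in>S. T (f s))" using insert by simp
  also have "\<dots> = (\<Sum>s\<in>insert s S. T (f s))" by (simp add: sum.insert[OF insert(1,2)])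
  finally show ?case .
qed

lemma lp_dilate: "lp f c = lp (dilate f c) 1"
  by (rule ext) (auto simp: lp_def dilate_def)

lemma row0_u_mult: "row (mult q (mono 1 0) b) 0 = row b (-1)"
  by (rule ext) (simp add: row_def mult_mono_left)

lemma row0_mult_u: "finsupp b \<Longrightarrow> row (mult q b (mono 1 0)) 0 = dilate (row b (-1)) (q powi 2)"
  by (rule ext) (simp add: row_def mult_mono_right dilate_def power_int_mult[symmetric] power_int_power)

section \<open>Characterization of twisted traces\<close>

definition kills_nonzero_degrees :: "complex \<Rightarrow> (int \<Rightarrow> complex) \<Rightarrow> (elt \<Rightarrow> complex) \<Rightarrow> bool" where
  "kills_nonzero_degrees q P T \<longleftrightarrow> (\<forall>i. i \<noteq> 0 \<longrightarrow> (\<forall>x\<in>grade q P i. T x = 0))"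

definition twisted_difference :: "complex \<Rightarrow> (int \<Rightarrow> complex) \<Rightarrow> complex \<Rightarrow> (int \<Rightarrow> complex) \<Rightarrow> elt" where
  "twisted_difference q P t R =
     mult q (lp P (inverse q)) (lp R (inverse q)) - smul t (mult q (lp P q) (lp R q))"

definition twisted_relation :: "complex \<Rightarrow> (int \<Rightarrow> complex) \<Rightarrow> complex \<Rightarrow> (elt \<Rightarrow> complex) \<Rightarrow> bool" where
  "twisted_relation q P t T \<longleftrightarrow> (\<forall>R. finite {j. R j \<noteq> 0} \<longrightarrow> T (twisted_difference q P t R) = 0)"

locale qweyl =
  fixes q :: complex and P :: "int \<Rightarrow> complex"
  assumes finite_P: "finite {j. P j \<noteq> 0}"
    and q_nonzero: "q \<noteq> 0"
    and q_not_root_of_unity: "k \<noteq> 0 \<Longrightarrow> q powi k \<noteq> 1"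
begin

lemma qWeyl_finsupp: "x \<in> qWeyl q P \<Longrightarrow> finsupp x"
  by (induction rule: qWeyl.induct)
    (blast intro: finsupp_mono finsupp_vgen[OF finite_P] finsupp_add finsupp_smul finsupp_mult)+

lemma lfinite_P: "lfinite P"
  using finite_P by (simp add: lfinite_def)

lemma gt_qWeyl:
  assumes "t \<noteq> 0"
  shows "x \<in> qWeyl q P \<Longrightarrow> gt t x \<in> qWeyl q P"
proof (induction rule: qWeyl.induct)
  case (mul x y)
  then show ?case unfolding gt_mult[OF qWeyl_finsupp[OF mul(1)] assms] by (intro qWeyl.mul)
qed (simp_all only: gt_mono gt_vgen gt_add gt_smul qWeyl.intros)

lemma component_qWeyl: "x \<in> qWeyl q P \<Longrightarrow> component x a \<in> qWeyl q P"
proof (induction arbitrary: a rule: qWeyl.induct)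
  case gen_v
  have "component (vgen q P) a = (if a = -1 then vgen q P else 0)"
    by (rule component_concentrated) (simp add: vgen_eq)
  then show ?case by (simp add: qWeyl_zero qWeyl.intros)
next
  case (add x y) then show ?case by (simp only: component_add qWeyl.add)
next
  case (scal x c) then show ?case by (simp only: component_smul qWeyl.scal)
next
  case (mul x y)
  have fx: "finsupp x" and fy: "finsupp y" using qWeyl_finsupp mul by auto
  define I where "I = fst ` supp x"
  define J where "J = fst ` supp y"
  have fI: "finite I" and fJ: "finite J" using fx fy by (auto simp: I_def J_def finsupp_def)
  have "mult q x y = mult q (\<Sum>b\<in>I. component x b) (\<Sum>c\<in>J. component y c)"
    using sum_component[OF fI, of x] sum_component[OF fJ, of y] by (simp add: I_def J_def)
  also have "\<dots> = (\<Sum>b\<in>I. \<Sum>c\<in>J. mult q (component x b) (component y c))"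
    by (simp add: mult_sum_left[OF fI] finsupp_sum[OF fJ] finsupp_component fy fx mult_sum_right[OF fJ] sum.swap[of _ J])
  finally have e: "component (mult q x y) a = (\<Sum>b\<in>I. \<Sum>c\<in>J. component (mult q (component x b) (component y c)) a)"
    by (simp add: component_sum fI fJ)
  show ?case unfolding e component_mult_components
    by (intro qWeyl_sum fI fJ) (auto intro: qWeyl.mul mul.IH qWeyl_zero)
qed (simp_all add: component_mono qWeyl_zero qWeyl.intros)

lemma component_in_grade:
  assumes x: "x \<in> qWeyl q P"
  shows "component x i \<in> grade q P i"
proof -
  have f: "finsupp (component x i)" using qWeyl_finsupp[OF x] by (rule finsupp_component)
  have "mult q (mult q (mono 0 1) (component x i)) (mono 0 (-1)) = smul (q powi (2 * i)) (component x i)"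
    by (rule ext, clarify)
      (simp add: mult_mono_right[OF finsupp_mult[OF finsupp_mono f]] mult_mono_left smul_def component_apply)
  then show ?thesis using component_qWeyl[OF x] unfolding grade_def by simp
qed

lemma row0_eq_zero_if_in_grade:
  assumes x: "x \<in> grade q P i" and i: "i \<noteq> 0"
  shows "row x 0 = 0"
proof (rule ext)
  fix j
  have xA: "x \<in> qWeyl q P"
    and eq: "mult q (mult q (mono 0 1) x) (mono 0 (-1)) = smul (q powi (2 * i)) x"
    using x unfolding grade_def by auto
  have "mult q (mult q (mono 0 1) x) (mono 0 (-1)) (0,j) = x (0,j)"
    by (simp add: mult_mono_right[OF finsupp_mult[OF finsupp_mono qWeyl_finsupp[OF xA]]] mult_mono_left)
  then have "(q powi (2 * i) - 1) * x (0,j) = 0"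
    using eq by (simp add: smul_def fun_eq_iff algebra_simps)
  moreover have "q powi (2 * i) \<noteq> 1" using q_not_root_of_unity i by simp
  ultimately show "row x 0 j = 0 j" by (simp add: row_def)
qed

lemma trace_eq_row0:
  assumes T: "linear_on (qWeyl q P) T" "kills_nonzero_degrees q P T" and x: "x \<in> qWeyl q P"
  shows "T x = T (lp (row x 0) 1)"
proof -
  define I where "I = insert 0 (fst ` supp x)"
  have fI: "finite I" using qWeyl_finsupp[OF x] by (simp add: I_def finsupp_def)
  have "x = (\<Sum>a\<in>I. component x a)" by (rule sum_component[OF fI]) (auto simp: I_def)
  then have "T x = (\<Sum>a\<in>I. T (component x a))"
    using linear_on_sum[OF T(1) fI, of "component x"] component_qWeyl[OF x] by simp
  also have "\<dots> = (\<Sum>a\<in>I. if a = 0 then T (component x 0) else 0)"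
    using component_in_grade[OF x] T(2) by (intro sum.cong refl) (auto simp: kills_nonzero_degrees_def)
  also have "\<dots> = T (component x 0)" using fI by (simp add: sum.delta' I_def)
  also have "component x 0 = lp (row x 0) 1"
    by (rule ext) (auto simp: component_def lp_def row_def)
  finally show ?thesis .
qed

text \<open>Since \<open>v\<^sup>m = u\<^sup>-\<^sup>m P(q\<^sup>-\<^sup>1Z) P(q\<^sup>-\<^sup>3Z) \<cdots> P(q\<^sup>1\<^sup>-\<^sup>2\<^sup>mZ)\<close>, the coefficient of
  \<open>u\<^sup>-\<^sup>m\<close> of every element of the algebra is divisible by each of these factors.\<close>

definition P_factor :: "int \<Rightarrow> int \<Rightarrow> complex" where
  "P_factor k = dilate P (q powi (1 - 2 * k))"

definition negative_rows_divisible :: "elt \<Rightarrow> bool" where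
  "negative_rows_divisible x \<longleftrightarrow> (\<forall>m k. 1 \<le> k \<and> k \<le> m \<longrightarrow> ldvd (P_factor k) (row x (-m)))"

lemma lfinite_P_factor: "lfinite (P_factor k)"
  unfolding P_factor_def by (rule lfinite_dilate[OF lfinite_P])

lemma dilate_P_factor: "dilate (P_factor k) (q powi (2 * b)) = P_factor (k - b)"
proof -
  have "q powi (1 - 2 * k) * q powi (2 * b) = q powi (1 - 2 * (k - b))"
    using q_nonzero by (simp add: power_int_add[symmetric] algebra_simps)
  then show ?thesis unfolding P_factor_def dilate_dilate by simp
qed

lemma negative_rows_divisible_mult:
  assumes x: "finsupp x" "negative_rows_divisible x" and y: "finsupp y" "negative_rows_divisible y"
  shows "negative_rows_divisible (mult q x y)"
  unfolding negative_rows_divisible_def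
proof (intro allI impI)
  fix m k :: int assume mk: "1 \<le> k \<and> k \<le> m"
  show "ldvd (P_factor k) (row (mult q x y) (-m))"
    unfolding row_mult[OF x(1) y(1)]
  proof (rule ldvd_sum)
    show "finite (fst ` supp x)" using x(1) by (simp add: finsupp_def)
  next
    fix a
    show "ldvd (P_factor k) (conv (dilate (row x a) (q powi (2 * (-m - a)))) (row y (-m - a)))"
    proof (cases "k \<le> m + a")
      case True
      then have "ldvd (P_factor k) (row y (-(m + a)))"
        using y(2) mk unfolding negative_rows_divisible_def by blast
      then show ?thesis by (intro ldvd_conv_left lfinite_P_factor lfinite_dilate lfinite_row x(1)) simp
    next
      case False
      define b where "b = -m - a"
      have "1 \<le> k + b \<and> k + b \<le> m + b" using mk False by (simp add: b_def)
      then have "ldvd (P_factor (k + b)) (row x (-(m + b)))"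
        using x(2) unfolding negative_rows_divisible_def by blast
      then have "ldvd (P_factor (k + b)) (row x a)" by (simp add: b_def)
      then have "ldvd (dilate (P_factor (k + b)) (q powi (2 * b))) (dilate (row x a) (q powi (2 * b)))"
        by (intro ldvd_dilate lfinite_P_factor) (simp_all add: b_def q_nonzero)
      then have "ldvd (P_factor k) (dilate (row x a) (q powi (2 * b)))"
        by (simp add: dilate_P_factor)
      then show ?thesis by (intro ldvd_conv_right lfinite_P_factor lfinite_row y(1)) (simp add: b_def)
    qed
  qed
qed

lemma qWeyl_negative_rows_divisible: "x \<in> qWeyl q P \<Longrightarrow> negative_rows_divisible x"
proof (induction rule: qWeyl.induct)
  case gen_v
  have "row (vgen q P) (-m) = (if m = 1 then P_factor 1 else 0)" for m
    by (auto simp: row_def vgen_eq P_factor_def dilate_def power_int_minus)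
  then show ?case
    by (auto simp: negative_rows_divisible_def ldvd_zero ldvd_self lfinite_P_factor)
next
  case (add x y) then show ?case
    unfolding negative_rows_divisible_def row_add by (blast intro: ldvd_add)
next
  case (scal x c) then show ?case
    by (auto simp: negative_rows_divisible_def row_smul intro: ldvd_cmult)
next
  case (mul x y) then show ?case
    by (intro negative_rows_divisible_mult qWeyl_finsupp)
qed (auto simp: negative_rows_divisible_def row_def mono_def ldvd_zero[unfolded zero_fun_def])

lemma row_minus_one_divisible:
  assumes "x \<in> qWeyl q P"
  obtains s where "lfinite s" "row x (-1) = conv (dilate P (inverse q)) s"
  using qWeyl_negative_rows_divisible[OF assms]
  unfolding negative_rows_divisible_def ldvd_def P_factor_def by (force simp: power_int_minus)

lemma row0_v_mult:
  assumes fb: "finsupp b"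
  shows "row (mult q (vgen q P) b) 0 = conv (dilate P q) (row b 1)"
proof (rule ext)
  fix j
  have fL: "finsupp (lp P (inverse q))" using lfinite_P by (simp add: finsupp_lp lfinite_def)
  have "mult q (vgen q P) b = mult q (mono (-1) 0) (mult q (lp P (inverse q)) b)"
    unfolding vgen_def by (rule mult_assoc[OF finsupp_mono fL q_nonzero])
  then have "row (mult q (vgen q P) b) 0 j = mult q (lp P (inverse q)) b (1, j)"
    by (simp add: row_def mult_mono_left)
  also have "\<dots> = conv (dilate P (inverse q * q powi (2*1))) (row b 1) j"
    by (rule mult_lp_left[OF lfinite_P fb])
  also have "inverse q * q powi (2*1) = q" using q_nonzero by (simp add: power2_eq_square)
  finally show "row (mult q (vgen q P) b) 0 j = conv (dilate P q) (row b 1) j" .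
qed

lemma row0_mult_v:
  assumes fb: "finsupp b"
  shows "row (mult q b (vgen q P)) 0 = conv (dilate (row b 1) (q powi (-2))) (dilate P (inverse q))"
proof (rule ext)
  fix j
  have fb': "finsupp (mult q b (mono (-1) 0))" by (intro finsupp_mult fb finsupp_mono)
  have "mult q b (vgen q P) = mult q (mult q b (mono (-1) 0)) (lp P (inverse q))"
    unfolding vgen_def by (rule mult_assoc[OF fb finsupp_mono q_nonzero, symmetric])
  then have "row (mult q b (vgen q P)) 0 j = conv (row (mult q b (mono (-1) 0)) 0) (dilate P (inverse q)) j"
    by (simp add: row_def mult_lp_right[OF fb'])
  also have "row (mult q b (mono (-1) 0)) 0 = dilate (row b 1) (q powi (-2))"
    by (rule ext) (simp add: row_def mult_mono_right[OF fb] dilate_def power_int_mult[symmetric])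
  finally show "row (mult q b (vgen q P)) 0 j = conv (dilate (row b 1) (q powi (-2))) (dilate P (inverse q)) j" .
qed

lemma twisted_difference_eq:
  assumes "lfinite R"
  shows "twisted_difference q P t R = lp (conv P R) (inverse q) - smul t (lp (conv P R) q)"
  using q_nonzero by (simp add: twisted_difference_def mult_lp_lp[OF lfinite_P assms])

lemma twisted_relation_dilated:
  assumes T: "linear_on (qWeyl q P) T" "twisted_relation q P t T" and R: "lfinite R"
  shows "T (lp (dilate (conv P R) (inverse q)) 1) = t * T (lp (dilate (conv P R) q) 1)"
proof -
  have fin: "finite {j. conv P R j \<noteq> 0}" using lfinite_conv[OF lfinite_P R] by (simp add: lfinite_def)
  have "T (twisted_difference q P t R) = 0" using T(2) R by (simp add: twisted_relation_def lfinite_def)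
  then have "T (lp (conv P R) (inverse q)) - t * T (lp (conv P R) q) = 0"
    by (simp add: twisted_difference_eq[OF R] linear_on_diff[OF T(1)] linear_on_smul[OF T(1)]
        qWeyl_lp[OF fin] qWeyl.scal)
  then show ?thesis by (simp add: lp_dilate[symmetric])
qed

definition twisted_commutes :: "complex \<Rightarrow> (elt \<Rightarrow> complex) \<Rightarrow> elt \<Rightarrow> bool" where
  "twisted_commutes t T a \<longleftrightarrow> (\<forall>b\<in>qWeyl q P. T (mult q a b) = T (mult q b (gt t a)))"

lemma twisted_commutes_add:
  assumes "t \<noteq> 0" "linear_on (qWeyl q P) T" "x \<in> qWeyl q P" "y \<in> qWeyl q P"
    and "twisted_commutes t T x" "twisted_commutes t T y"
  shows "twisted_commutes t T (x + y)"
  unfolding twisted_commutes_def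
proof
  fix b assume b: "b \<in> qWeyl q P"
  have "T (mult q (x + y) b) = T (mult q x b) + T (mult q y b)"
    using assms b by (simp add: mult_add_left qWeyl_finsupp linear_on_add qWeyl.mul)
  also have "\<dots> = T (mult q b (gt t x)) + T (mult q b (gt t y))"
    using assms(5,6) b by (simp add: twisted_commutes_def)
  also have "\<dots> = T (mult q b (gt t (x + y)))"
    using assms b by (simp add: gt_add mult_add_right linear_on_add qWeyl.mul gt_qWeyl)
  finally show "T (mult q (x + y) b) = T (mult q b (gt t (x + y)))" .
qed

lemma twisted_commutes_smul:
  assumes "t \<noteq> 0" "linear_on (qWeyl q P) T" "x \<in> qWeyl q P" "twisted_commutes t T x"
  shows "twisted_commutes t T (smul c x)"
  using assms
  by (simp add: twisted_commutes_def mult_smul_left qWeyl_finsupp gt_smul mult_smul_right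
      linear_on_smul qWeyl.mul gt_qWeyl)

lemma twisted_commutes_mult:
  assumes "t \<noteq> 0" "x \<in> qWeyl q P" "y \<in> qWeyl q P"
    and x: "twisted_commutes t T x" and y: "twisted_commutes t T y"
  shows "twisted_commutes t T (mult q x y)"
  unfolding twisted_commutes_def
proof
  fix b assume b: "b \<in> qWeyl q P"
  have fin: "finsupp x" "finsupp y" "finsupp b" "finsupp (gt t x)"
    using assms b by (simp_all add: qWeyl_finsupp gt_qWeyl)
  have "T (mult q (mult q x y) b) = T (mult q (mult q y b) (gt t x))"
    using x assms b by (simp add: mult_assoc[OF fin(1,2) q_nonzero] twisted_commutes_def qWeyl.mul)
  also have "\<dots> = T (mult q (mult q b (gt t x)) (gt t y))"
    using y assms b by (simp add: mult_assoc[OF fin(2,3) q_nonzero] twisted_commutes_def qWeyl.mul gt_qWeyl)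
  also have "\<dots> = T (mult q b (gt t (mult q x y)))"
    by (simp add: mult_assoc[OF fin(3,4) q_nonzero] gt_mult[OF fin(1) assms(1)])
  finally show "T (mult q (mult q x y) b) = T (mult q b (gt t (mult q x y)))" .
qed

lemma twisted_trace_if_generators:
  assumes "t \<noteq> 0" "linear_on (qWeyl q P) T"
    and "twisted_commutes t T (mono 0 0)" "twisted_commutes t T (mono 1 0)"
      "twisted_commutes t T (vgen q P)" "twisted_commutes t T (mono 0 1)"
      "twisted_commutes t T (mono 0 (-1))"
  shows "twisted_trace q P t T"
proof -
  have "twisted_commutes t T a" if "a \<in> qWeyl q P" for a
    using that
  proof (induction rule: qWeyl.induct)
    case (add x y) then show ?case using assms(1,2) by (intro twisted_commutes_add)
  next
    case (scal x c) then show ?case using assms(1,2) by (intro twisted_commutes_smul)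
  next
    case (mul x y) then show ?case using assms(1) by (intro twisted_commutes_mult)
  qed (use assms in simp_all)
  then show ?thesis by (simp add: twisted_trace_def twisted_commutes_def)
qed

lemma inverse_mult_square: "inverse q * q\<^sup>2 = q"
  using q_nonzero by (simp add: power2_eq_square)

lemma u_mult_vgen: "mult q (mono 1 0) (vgen q P) = lp P (inverse q)"
proof -
  have "mult q (mono 1 0) (vgen q P) = mult q (mult q (mono 1 0) (mono (-1) 0)) (lp P (inverse q))"
    unfolding vgen_def by (rule mult_assoc[symmetric, OF finsupp_mono finsupp_mono q_nonzero])
  then show ?thesis by (simp add: mono_mult_mono mult_one_left)
qed

lemma conj_u_lp:
  assumes "lfinite f"
  shows "mult q (mult q (mono (-1) 0) (lp f c)) (mono 1 0) = lp f (c * q\<^sup>2)"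
proof (rule ext, clarify)
  fix i j :: int
  have fin: "finsupp (mult q (mono (-1) 0) (lp f c))"
    using assms by (intro finsupp_mult finsupp_mono finsupp_lp) (simp add: lfinite_def)
  have "(q\<^sup>2) powi j = q powi (2 * j)"
    by (simp add: power_int_mult)
  then show "mult q (mult q (mono (-1) 0) (lp f c)) (mono 1 0) (i,j) = lp f (c * q\<^sup>2) (i,j)"
    unfolding mult_mono_right[OF fin] mult_mono_left by (simp add: lp_def power_int_mult_distrib)
qed

lemma twisted_commutes_one: "twisted_commutes t T (mono 0 0)"
  by (simp add: twisted_commutes_def mult_one_left mult_one_right gt_mono qWeyl_finsupp)

lemma twisted_commutes_Z:
  assumes "linear_on (qWeyl q P) T" "kills_nonzero_degrees q P T"
  shows "twisted_commutes t T (mono 0 k)"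
  unfolding twisted_commutes_def
proof
  fix b assume b: "b \<in> qWeyl q P"
  have "row (mult q (mono 0 k) b) 0 = row (mult q b (mono 0 k)) 0"
    by (rule ext) (simp add: row_def mult_mono_left mult_mono_right[OF qWeyl_finsupp[OF b]])
  then show "T (mult q (mono 0 k) b) = T (mult q b (gt t (mono 0 k)))"
    using trace_eq_row0[OF assms qWeyl.mul[OF qWeyl_mono0 b]] trace_eq_row0[OF assms qWeyl.mul[OF b qWeyl_mono0]]
    by (simp add: gt_mono)
qed

text \<open>The coefficient of \<open>u\<^sup>-\<^sup>1\<close> in \<open>b\<close> has the form \<open>P(q\<^sup>-\<^sup>1z)R(q\<^sup>-\<^sup>1z)\<close>, and
  this is exactly the degree-zero part of \<open>u b\<close>; the relation then moves it to \<open>b u\<close>.\<close>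

lemma twisted_commutes_u:
  assumes T: "linear_on (qWeyl q P) T" "kills_nonzero_degrees q P T" "twisted_relation q P t T"
  shows "twisted_commutes t T (mono 1 0)"
  unfolding twisted_commutes_def
proof
  fix b assume b: "b \<in> qWeyl q P"
  obtain s where s: "lfinite s" "row b (-1) = conv (dilate P (inverse q)) s"
    using row_minus_one_divisible[OF b] .
  define R where "R = dilate s q"
  have R: "lfinite R" using s by (simp add: R_def lfinite_dilate)
  have e1: "dilate (conv P R) (inverse q) = row b (-1)"
    using q_nonzero by (simp add: dilate_conv[OF lfinite_P] R_def dilate_dilate s(2) dilate_one)
  have e2: "dilate (conv P R) q = dilate (row b (-1)) (q powi 2)"
    by (simp add: e1[symmetric] dilate_dilate inverse_mult_square)
  have "T (mult q (mono 1 0) b) = T (lp (row b (-1)) 1)"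
    using trace_eq_row0[OF T(1,2) qWeyl.mul[OF qWeyl.gen_u b]] by (simp add: row0_u_mult)
  also have "\<dots> = t * T (lp (dilate (row b (-1)) (q powi 2)) 1)"
    using twisted_relation_dilated[OF T(1,3) R] by (simp only: e1 e2)
  also have "\<dots> = t * T (mult q b (mono 1 0))"
    using trace_eq_row0[OF T(1,2) qWeyl.mul[OF b qWeyl.gen_u]]
    by (simp add: row0_mult_u[OF qWeyl_finsupp[OF b]])
  also have "\<dots> = T (mult q b (gt t (mono 1 0)))"
    by (simp add: gt_mono mult_smul_right linear_on_smul[OF T(1) qWeyl.mul[OF b qWeyl.gen_u]])
  finally show "T (mult q (mono 1 0) b) = T (mult q b (gt t (mono 1 0)))" .
qed

lemma twisted_commutes_v:
  assumes t: "t \<noteq> 0"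
    and T: "linear_on (qWeyl q P) T" "kills_nonzero_degrees q P T" "twisted_relation q P t T"
  shows "twisted_commutes t T (vgen q P)"
  unfolding twisted_commutes_def
proof
  fix b assume b: "b \<in> qWeyl q P"
  have fb: "finsupp b" using qWeyl_finsupp[OF b] .
  define R where "R = dilate (row b 1) (inverse q)"
  have R: "lfinite R" using lfinite_row[OF fb] by (simp add: R_def lfinite_dilate)
  have e1: "dilate (conv P R) q = conv (dilate P q) (row b 1)"
    using q_nonzero by (simp add: dilate_conv[OF lfinite_P] R_def dilate_dilate dilate_one)
  have "inverse q * inverse q = q powi (-2)"
    using q_nonzero by (simp add: power_int_minus power2_eq_square)
  then have e2: "dilate (conv P R) (inverse q) = conv (dilate (row b 1) (q powi (-2))) (dilate P (inverse q))"
    using q_nonzero by (simp add: dilate_conv[OF lfinite_P] R_def dilate_dilate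
        conv_comm[OF lfinite_dilate[OF lfinite_P] lfinite_dilate[OF lfinite_row[OF fb]]])
  have vb: "mult q (vgen q P) b \<in> qWeyl q P" and bv: "mult q b (vgen q P) \<in> qWeyl q P"
    using b by (simp_all add: qWeyl.mul qWeyl.gen_v)
  have "T (mult q (vgen q P) b) = inverse t * (t * T (lp (dilate (conv P R) q) 1))"
    using t trace_eq_row0[OF T(1,2) vb] by (simp add: row0_v_mult[OF fb] e1)
  also have "\<dots> = inverse t * T (mult q b (vgen q P))"
    using trace_eq_row0[OF T(1,2) bv] twisted_relation_dilated[OF T(1,3) R]
    by (simp add: row0_mult_v[OF fb] e2)
  also have "\<dots> = T (mult q b (gt t (vgen q P)))"
    by (simp add: gt_vgen mult_smul_right linear_on_smul[OF T(1) bv] power_int_minus)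
  finally show "T (mult q (vgen q P) b) = T (mult q b (gt t (vgen q P)))" .
qed

lemma twisted_trace_if:
  assumes "t \<noteq> 0"
    and "linear_on (qWeyl q P) T" "kills_nonzero_degrees q P T" "twisted_relation q P t T"
  shows "twisted_trace q P t T"
  using assms
  by (intro twisted_trace_if_generators twisted_commutes_one twisted_commutes_Z
      twisted_commutes_u twisted_commutes_v)

lemma twisted_trace_kills_nonzero_degrees:
  assumes T: "linear_on (qWeyl q P) T" "twisted_trace q P t T"
  shows "kills_nonzero_degrees q P T"
  unfolding kills_nonzero_degrees_def
proof (intro allI impI ballI)
  fix i x assume i: "i \<noteq> 0" and "x \<in> grade q P i"
  then have x: "x \<in> qWeyl q P"
    and conj: "mult q (mult q (mono 0 1) x) (mono 0 (-1)) = smul (q powi (2 * i)) x"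
    unfolding grade_def by auto
  have fx: "finsupp x" using qWeyl_finsupp[OF x] .
  define b where "b = mult q x (mono 0 (-1))"
  have b: "b \<in> qWeyl q P" unfolding b_def by (intro qWeyl.mul x qWeyl.gen_Zinv)
  have "mult q (mono 0 1) b = smul (q powi (2 * i)) x"
    unfolding b_def conj[symmetric] by (rule mult_assoc[symmetric, OF finsupp_mono fx q_nonzero])
  moreover have "mult q b (mono 0 1) = x"
    unfolding b_def mult_assoc[OF fx finsupp_mono q_nonzero]
    by (simp add: mono_mult_mono mult_one_right[OF fx])
  ultimately have "T (smul (q powi (2 * i)) x) = T x"
    using T(2) b unfolding twisted_trace_def by (metis gt_mono qWeyl.gen_Z power_int_0_right smul_one)
  then have "(q powi (2 * i) - 1) * T x = 0"
    using linear_on_smul[OF T(1) x] by (simp add: algebra_simps)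
  moreover have "q powi (2 * i) \<noteq> 1" using q_not_root_of_unity i by simp
  ultimately show "T x = 0" by simp
qed

text \<open>Applying the trace property to \<open>u\<close> and \<open>b = v R(q\<^sup>-\<^sup>1Z)\<close> gives the relation,
  since \<open>u b = P(q\<^sup>-\<^sup>1Z)R(q\<^sup>-\<^sup>1Z)\<close> and \<open>b u = P(qZ)R(qZ)\<close>.\<close>

lemma twisted_trace_relation:
  assumes T: "linear_on (qWeyl q P) T" "twisted_trace q P t T"
  shows "twisted_relation q P t T"
  unfolding twisted_relation_def
proof (intro allI impI)
  fix R :: "int \<Rightarrow> complex" assume "finite {j. R j \<noteq> 0}"
  then have R: "lfinite R" by (simp add: lfinite_def)
  have fin: "finsupp (lp R (inverse q))" "finsupp (lp P (inverse q))" "finsupp (vgen q P)"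
    using R lfinite_P by (simp_all add: finsupp_lp finsupp_vgen[OF finite_P] lfinite_def)
  define b where "b = mult q (vgen q P) (lp R (inverse q))"
  have b: "b \<in> qWeyl q P" using R unfolding b_def
    by (intro qWeyl.mul qWeyl.gen_v qWeyl_lp) (simp add: lfinite_def)
  have ub: "mult q (mono 1 0) b = mult q (lp P (inverse q)) (lp R (inverse q))"
    unfolding b_def mult_assoc[symmetric, OF finsupp_mono fin(3) q_nonzero] u_mult_vgen ..
  have "b = mult q (mono (-1) 0) (lp (conv P R) (inverse q))"
    unfolding b_def vgen_def mult_assoc[OF finsupp_mono fin(2) q_nonzero]
    using q_nonzero by (simp add: mult_lp_lp[OF lfinite_P R])
  then have bu: "mult q b (mono 1 0) = mult q (lp P q) (lp R q)"
    using q_nonzero by (simp add: conj_u_lp lfinite_conv[OF lfinite_P R] mult_lp_lp[OF lfinite_P R]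
        inverse_mult_square)
  have "T (mult q (lp P (inverse q)) (lp R (inverse q))) = t * T (mult q (lp P q) (lp R q))"
    using T(2) b ub bu unfolding twisted_trace_def
    by (metis gt_mono linear_on_smul[OF T(1)] mult_smul_right qWeyl.gen_u qWeyl.mul power_int_1_right)
  moreover have "mult q (lp P c) (lp R c) \<in> qWeyl q P" for c
    using finite_P R by (intro qWeyl.mul qWeyl_lp) (simp_all add: lfinite_def)
  ultimately show "T (twisted_difference q P t R) = 0"
    by (simp add: twisted_difference_def linear_on_diff[OF T(1)] linear_on_smul[OF T(1)] qWeyl.scal)
qed


lemma twisted_trace_iff:
  assumes "t \<noteq> 0" "linear_on (qWeyl q P) T"
  shows "twisted_trace q P t T \<longleftrightarrow> kills_nonzero_degrees q P T \<and> twisted_relation q P t T"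
  using assms twisted_trace_if twisted_trace_kills_nonzero_degrees twisted_trace_relation by blast


end

section \<open>The dimension of the space of twisted traces\<close>

definition twisted_traces :: "complex \<Rightarrow> (int \<Rightarrow> complex) \<Rightarrow> complex \<Rightarrow> (elt \<Rightarrow> complex) set" where
  "twisted_traces q P t = {T. linear_on (qWeyl q P) T \<and> twisted_trace q P t T
      \<and> (\<forall>x. x \<notin> qWeyl q P \<longrightarrow> T x = 0)}"

interpretation functionals: vector_space "\<lambda>c (f :: elt \<Rightarrow> complex) x. c * f x"
  by unfold_locales (auto simp: fun_eq_iff algebra_simps)

locale qweyl_twisted = qweyl +
  fixes t :: complex
  assumes t_nonzero: "t \<noteq> 0"
    and P_nonzero: "{j. P j \<noteq> 0} \<noteq> {}"
    and lspan_pos: "0 < lspan P"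
begin

definition top_deg :: int where "top_deg = Max {j. P j \<noteq> 0}"
definition bot_deg :: int where "bot_deg = Min {j. P j \<noteq> 0}"

lemma P_top_deg: "P top_deg \<noteq> 0"
  unfolding top_deg_def using Max_in[OF finite_P P_nonzero] by simp

lemma P_bot_deg: "P bot_deg \<noteq> 0"
  unfolding bot_deg_def using Min_in[OF finite_P P_nonzero] by simp

lemma P_zero_outside: "P c \<noteq> 0 \<Longrightarrow> bot_deg \<le> c \<and> c \<le> top_deg"
  unfolding bot_deg_def top_deg_def using finite_P by (auto intro: Min_le Max_ge)

lemma top_minus_bot_deg: "top_deg - bot_deg = int (lspan P)"
  unfolding lspan_def top_deg_def bot_deg_def
  using Min_le[OF finite_P Max_in[OF finite_P P_nonzero]] by simp

definition weight :: "int \<Rightarrow> complex" where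
  "weight j = q powi (-j) - t * q powi j"

lemma weight_zero_unique:
  assumes "weight a = 0" "weight b = 0"
  shows "a = b"
proof -
  have "t = q powi (-2 * j)" if "weight j = 0" for j
  proof -
    have "t = q powi (-j) / q powi j" using that q_nonzero by (simp add: weight_def field_simps)
    also have "\<dots> = q powi (-j - j)" by (rule power_int_diff[symmetric]) (simp add: q_nonzero)
    also have "-j - j = -2 * j" by simp
    finally show ?thesis .
  qed
  then have eq: "q powi (-2 * a) = q powi (-2 * b)"
    using assms by metis
  have "q powi (2 * (b - a)) = q powi (-2 * a - (-2 * b))"
    by (rule arg_cong[where f = "power_int q"]) simp
  also have "\<dots> = q powi (-2 * a) / q powi (-2 * b)"
    by (rule power_int_diff) (simp add: q_nonzero)
  also have "\<dots> = 1" using eq q_nonzero by simp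
  finally have "q powi (2 * (b - a)) = 1" .
  then show "a = b" using q_not_root_of_unity[of "2 * (b - a)"] by auto
qed

text \<open>A window of \<open>lspan P\<close> consecutive integers containing the (at most one) zero of
  \<open>weight\<close>; a solution of the recurrence is determined by its values on the window.\<close>

definition base :: int where
  "base = (if \<exists>j. weight j = 0 then (SOME j. weight j = 0) else 0)"

lemma weight_nonzero_outside_window:
  assumes "j < base \<or> base + int (lspan P) \<le> j"
  shows "weight j \<noteq> 0"
proof
  assume j: "weight j = 0"
  then have "weight base = 0" using someI_ex[of "\<lambda>j. weight j = 0"] by (auto simp: base_def)
  with j have "j = base" by (rule weight_zero_unique)
  with assms lspan_pos show False by simp
qed

definition rec_sum :: "(int \<Rightarrow> complex) \<Rightarrow> int \<Rightarrow> complex" where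
  "rec_sum \<tau> m = (\<Sum>c\<in>{bot_deg..top_deg}. P c * weight (m + c) * \<tau> (m + c))"

definition recurrent :: "(int \<Rightarrow> complex) \<Rightarrow> bool" where
  "recurrent \<tau> \<longleftrightarrow> (\<forall>m. rec_sum \<tau> m = 0)"

definition window_rank :: "int \<Rightarrow> nat" where
  "window_rank j = (if base \<le> j then nat (j - base) else nat (base + int (lspan P) - 1 - j))"

function extend :: "(nat \<Rightarrow> complex) \<Rightarrow> int \<Rightarrow> complex" where
  "extend w j =
    (if base \<le> j \<and> j < base + int (lspan P) then w (nat (j - base))
     else if base + int (lspan P) \<le> j then
       - (\<Sum>e\<in>{1..lspan P}. P (top_deg - int e) * weight (j - int e) * extend w (j - int e))
         / (P top_deg * weight j)
     else
       - (\<Sum>e\<in>{1..lspan P}. P (bot_deg + int e) * weight (j + int e) * extend w (j + int e))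
         / (P bot_deg * weight j))"
  by pat_completeness auto
termination
  by (relation "measure (\<lambda>(w, j). window_rank j)") (auto simp: window_rank_def)

declare extend.simps [simp del]

lemma extend_window: "i < lspan P \<Longrightarrow> extend w (base + int i) = w i"
  by (simp add: extend.simps)

lemma rec_sum_split_top:
  "rec_sum \<tau> m = P top_deg * weight (m + top_deg) * \<tau> (m + top_deg) +
     (\<Sum>e\<in>{1..lspan P}. P (top_deg - int e) * weight (m + top_deg - int e) * \<tau> (m + top_deg - int e))"
  unfolding rec_sum_def sum_int_interval_split_top[OF top_minus_bot_deg] by (simp add: add_diff_eq)

lemma rec_sum_split_bot:
  "rec_sum \<tau> m = P bot_deg * weight (m + bot_deg) * \<tau> (m + bot_deg) +
     (\<Sum>e\<in>{1..lspan P}. P (bot_deg + int e) * weight (m + bot_deg + int e) * \<tau> (m + bot_deg + int e))"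
  unfolding rec_sum_def sum_int_interval_split_bot[OF top_minus_bot_deg] by (simp add: add.assoc)

lemma recurrent_extend: "recurrent (extend w)"
  unfolding recurrent_def
proof
  fix m
  consider (above) "base + int (lspan P) \<le> m + top_deg" | (below) "m + bot_deg < base"
    using top_minus_bot_deg by linarith
  then show "rec_sum (extend w) m = 0"
  proof cases
    case above
    define j where "j = m + top_deg"
    have "P top_deg * weight j \<noteq> 0"
      using P_top_deg weight_nonzero_outside_window above by (simp add: j_def)
    moreover have "extend w j = - (\<Sum>e\<in>{1..lspan P}. P (top_deg - int e) * weight (j - int e) *
        extend w (j - int e)) / (P top_deg * weight j)"
      using above by (subst extend.simps) (simp add: j_def)
    ultimately show ?thesis by (simp add: rec_sum_split_top j_def[symmetric])
  next
    case below
    define j where "j = m + bot_deg"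
    have "P bot_deg * weight j \<noteq> 0"
      using P_bot_deg weight_nonzero_outside_window below by (simp add: j_def)
    moreover have "extend w j = - (\<Sum>e\<in>{1..lspan P}. P (bot_deg + int e) * weight (j + int e) *
        extend w (j + int e)) / (P bot_deg * weight j)"
      using below by (subst extend.simps) (simp add: j_def)
    ultimately show ?thesis by (simp add: rec_sum_split_bot j_def[symmetric])
  qed
qed

lemma recurrent_zero_on_window:
  assumes rec: "recurrent \<tau>" and window: "\<And>i. i < lspan P \<Longrightarrow> \<tau> (base + int i) = 0"
  shows "\<tau> j = 0"
proof (induction j rule: measure_induct_rule[of window_rank])
  case (less j)
  consider (inside) "base \<le> j" "j < base + int (lspan P)" | (above) "base + int (lspan P) \<le> j"
    | (below) "j < base" by linarith
  then show ?case
  proof cases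
    case inside
    then show ?thesis using window[of "nat (j - base)"] by simp
  next
    case above
    have "\<tau> (j - int e) = 0" if "e \<in> {1..lspan P}" for e
      using that above by (intro less) (auto simp: window_rank_def)
    then have "P top_deg * weight j * \<tau> j = 0"
      using rec rec_sum_split_top[of \<tau> "j - top_deg"] by (simp add: recurrent_def)
    then show ?thesis using P_top_deg weight_nonzero_outside_window above by simp
  next
    case below
    have "\<tau> (j + int e) = 0" if "e \<in> {1..lspan P}" for e
      using that below by (intro less) (auto simp: window_rank_def)
    then have "P bot_deg * weight j * \<tau> j = 0"
      using rec rec_sum_split_bot[of \<tau> "j - bot_deg"] by (simp add: recurrent_def)
    then show ?thesis using P_bot_deg weight_nonzero_outside_window below by simp
  qed
qed

lemma recurrent_lincomb:
  assumes "\<And>s. s \<in> S \<Longrightarrow> recurrent (g s)"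
  shows "recurrent (\<lambda>j. \<Sum>s\<in>S. c s * g s j)"
proof -
  have "rec_sum (\<lambda>j. \<Sum>s\<in>S. c s * g s j) m = (\<Sum>s\<in>S. c s * rec_sum (g s) m)" for m
    unfolding rec_sum_def by (simp add: sum_distrib_left sum.swap[of _ S] algebra_simps)
  then show ?thesis using assms by (simp add: recurrent_def)
qed

lemma recurrent_diff:
  assumes "recurrent a" "recurrent b"
  shows "recurrent (\<lambda>j. a j - b j)"
proof -
  have "rec_sum (\<lambda>j. a j - b j) m = rec_sum a m - rec_sum b m" for m
    unfolding rec_sum_def by (simp add: sum_subtractf[symmetric] algebra_simps)
  then show ?thesis using assms by (simp add: recurrent_def)
qed

lemma row0_twisted_difference:
  assumes "lfinite R"
  shows "row (twisted_difference q P t R) 0 = (\<lambda>j. conv P R j * weight j)"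
proof (rule ext)
  fix j
  have "inverse q powi j = q powi (-j)" by (simp add: power_int_inverse power_int_minus)
  then show "row (twisted_difference q P t R) 0 j = conv P R j * weight j"
    by (simp add: twisted_difference_eq[OF assms] row_def lp_def smul_def weight_def algebra_simps)
qed

lemma lfinite_P_shift: "lfinite (\<lambda>j. P (j - m) * f j)"
proof -
  have "{j. P (j - m) * f j \<noteq> 0} \<subseteq> (\<lambda>c. c + m) ` {j. P j \<noteq> 0}"
    by (auto intro: image_eqI[of _ _ "_ - m"])
  then show ?thesis unfolding lfinite_def using finite_P by (rule finite_subset[OF _ finite_imageI])
qed

lemma pairing_P_shift: "pairing \<tau> (\<lambda>j. P (j - m) * weight j) = rec_sum \<tau> m"
proof -
  have "pairing \<tau> (\<lambda>j. P (j - m) * weight j) = (\<Sum>j\<in>(\<lambda>c. m + c) ` {bot_deg..top_deg}. P (j - m) * weight j * \<tau> j)"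
    by (rule pairing_superset) (auto dest: P_zero_outside intro: image_eqI[of _ _ "_ - m"])
  also have "\<dots> = rec_sum \<tau> m"
    by (subst sum.reindex) (auto simp: inj_on_def rec_sum_def)
  finally show ?thesis .
qed

lemma pairing_row0_twisted_difference:
  assumes R: "lfinite R"
  shows "pairing \<tau> (row (twisted_difference q P t R) 0) = (\<Sum>m\<in>{m. R m \<noteq> 0}. R m * rec_sum \<tau> m)"
proof -
  have fin: "finite {m. R m \<noteq> 0}" using R by (simp add: lfinite_def)
  have "(\<lambda>j. conv P R j * weight j) = (\<Sum>m\<in>{m. R m \<noteq> 0}. (\<lambda>j. R m * (P (j - m) * weight j)))"
  proof
    fix j
    have "conv P R j = conv R P j" by (simp add: conv_comm[OF lfinite_P R])
    then show "conv P R j * weight j = (\<Sum>m\<in>{m. R m \<noteq> 0}. (\<lambda>j. R m * (P (j - m) * weight j))) j"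
      by (simp add: sum_fun_apply conv_def sum_distrib_left mult.commute mult.left_commute)
  qed
  then have "pairing \<tau> (row (twisted_difference q P t R) 0) =
      (\<Sum>m\<in>{m. R m \<noteq> 0}. pairing \<tau> (\<lambda>j. R m * (P (j - m) * weight j)))"
    by (simp add: row0_twisted_difference[OF R] pairing_sum[OF fin] lfinite_cmult lfinite_P_shift)
  also have "\<dots> = (\<Sum>m\<in>{m. R m \<noteq> 0}. R m * rec_sum \<tau> m)"
    by (simp add: pairing_cmult lfinite_P_shift pairing_P_shift)
  finally show ?thesis .
qed

definition trace_of :: "(int \<Rightarrow> complex) \<Rightarrow> elt \<Rightarrow> complex" where
  "trace_of \<tau> x = (if x \<in> qWeyl q P then pairing \<tau> (row x 0) else 0)"

lemma trace_of_linear: "linear_on (qWeyl q P) (trace_of \<tau>)"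
  unfolding linear_on_def
proof (intro conjI ballI allI)
  fix x y assume x: "x \<in> qWeyl q P" and y: "y \<in> qWeyl q P"
  then show "trace_of \<tau> (x + y) = trace_of \<tau> x + trace_of \<tau> y"
    by (simp add: trace_of_def qWeyl.add row_add pairing_add lfinite_row qWeyl_finsupp)
next
  fix c x assume x: "x \<in> qWeyl q P"
  then show "trace_of \<tau> (smul c x) = c * trace_of \<tau> x"
    by (simp add: trace_of_def qWeyl.scal row_smul pairing_cmult lfinite_row qWeyl_finsupp)
qed

lemma twisted_difference_qWeyl: "lfinite R \<Longrightarrow> twisted_difference q P t R \<in> qWeyl q P"
  using finite_P unfolding twisted_difference_def
  by (intro qWeyl_diff qWeyl.mul qWeyl.scal qWeyl_lp) (auto simp: lfinite_def)

lemma trace_of_twisted_difference: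
  "lfinite R \<Longrightarrow> trace_of \<tau> (twisted_difference q P t R) = (\<Sum>m\<in>{m. R m \<noteq> 0}. R m * rec_sum \<tau> m)"
  by (simp add: trace_of_def twisted_difference_qWeyl pairing_row0_twisted_difference)

lemma trace_of_mono: "trace_of \<tau> (mono 0 j) = \<tau> j"
proof -
  have "row (mono 0 j) 0 = (\<lambda>j'. if j' = j then 1 else 0)" by (rule ext) (simp add: row_def mono_def)
  then show ?thesis by (simp add: trace_of_def qWeyl_mono0 pairing_indicator)
qed

lemma trace_of_lincomb: "trace_of (\<lambda>j. \<Sum>s\<in>S. c s * g s j) x = (\<Sum>s\<in>S. c s * trace_of (g s) x)"
  by (simp add: trace_of_def pairing_lincomb_left)

lemma trace_of_twisted_traces:
  assumes "recurrent \<tau>"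
  shows "trace_of \<tau> \<in> twisted_traces q P t"
proof -
  have "kills_nonzero_degrees q P (trace_of \<tau>)"
    by (auto simp: kills_nonzero_degrees_def trace_of_def grade_def row0_eq_zero_if_in_grade pairing_zero)
  moreover have "twisted_relation q P t (trace_of \<tau>)"
    using assms by (simp add: twisted_relation_def recurrent_def trace_of_twisted_difference lfinite_def)
  ultimately have "twisted_trace q P t (trace_of \<tau>)"
    by (intro twisted_trace_if t_nonzero trace_of_linear)
  then show ?thesis by (simp add: twisted_traces_def trace_of_linear trace_of_def)
qed

lemma twisted_traces_eq_trace_of:
  assumes "T \<in> twisted_traces q P t"
  shows "recurrent (\<lambda>j. T (mono 0 j))" "T = trace_of (\<lambda>j. T (mono 0 j))"
proof -
  define \<tau> where "\<tau> j = T (mono 0 j)" for j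
  have T: "linear_on (qWeyl q P) T" "twisted_trace q P t T" "\<forall>x. x \<notin> qWeyl q P \<longrightarrow> T x = 0"
    using assms by (auto simp: twisted_traces_def)
  have kills: "kills_nonzero_degrees q P T"
    by (rule twisted_trace_kills_nonzero_degrees[OF T(1,2)])
  have "T x = trace_of \<tau> x" for x
  proof (cases "x \<in> qWeyl q P")
    case True
    have fin: "finite {j. row x 0 j \<noteq> 0}"
      using lfinite_row[OF qWeyl_finsupp[OF True]] by (simp add: lfinite_def)
    have "T x = T (\<Sum>j\<in>{j. row x 0 j \<noteq> 0}. smul (row x 0 j) (mono 0 j))"
      using trace_eq_row0[OF T(1) kills True] by (simp add: lp_as_sum[OF fin])
    also have "\<dots> = (\<Sum>j\<in>{j. row x 0 j \<noteq> 0}. row x 0 j * \<tau> j)"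
      by (simp add: linear_on_sum[OF T(1) fin] qWeyl.scal qWeyl_mono0 linear_on_smul[OF T(1)] \<tau>_def)
    finally show ?thesis using True by (simp add: trace_of_def pairing_def)
  qed (use T(3) in \<open>simp add: trace_of_def\<close>)
  then show eq: "T = trace_of (\<lambda>j. T (mono 0 j))" unfolding \<tau>_def by blast
  have "rec_sum \<tau> m = 0" for m
  proof -
    have "lfinite (\<lambda>j. if j = m then 1 else 0)" by (simp add: lfinite_def)
    then have "T (twisted_difference q P t (\<lambda>j. if j = m then 1 else 0)) = rec_sum \<tau> m"
      by (simp add: eq[folded \<tau>_def] trace_of_twisted_difference)
    then show ?thesis
      using twisted_trace_relation[OF T(1,2)] by (simp add: twisted_relation_def)
  qed
  then show "recurrent (\<lambda>j. T (mono 0 j))" by (simp add: recurrent_def \<tau>_def[symmetric])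
qed

definition trace_basis :: "nat \<Rightarrow> elt \<Rightarrow> complex" where
  "trace_basis r = trace_of (extend (\<lambda>i. if i = r then 1 else 0))"

lemma trace_basis_window:
  "i < lspan P \<Longrightarrow> trace_basis r (mono 0 (base + int i)) = (if i = r then 1 else 0)"
  by (simp add: trace_basis_def trace_of_mono extend_window)

lemma trace_basis_twisted_traces: "trace_basis r \<in> twisted_traces q P t"
  unfolding trace_basis_def by (intro trace_of_twisted_traces recurrent_extend)

lemma inj_on_trace_basis: "inj_on trace_basis {..<lspan P}"
proof (rule inj_onI)
  fix r s assume "r \<in> {..<lspan P}" "s \<in> {..<lspan P}" "trace_basis r = trace_basis s"
  then show "r = s" using trace_basis_window[of r r] trace_basis_window[of r s] by (auto split: if_splits)
qed

lemma twisted_traces_expansion: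
  assumes T: "T \<in> twisted_traces q P t"
  shows "T = (\<Sum>r<lspan P. (\<lambda>x. T (mono 0 (base + int r)) * trace_basis r x))"
proof -
  define \<tau> where "\<tau> = (\<lambda>j. T (mono 0 j))"
  define \<sigma> where "\<sigma> = (\<lambda>j. \<Sum>r<lspan P. \<tau> (base + int r) * extend (\<lambda>i. if i = r then 1 else 0) j)"
  have "recurrent (\<lambda>j. \<tau> j - \<sigma> j)"
    unfolding \<sigma>_def using twisted_traces_eq_trace_of(1)[OF T]
    by (intro recurrent_diff recurrent_lincomb recurrent_extend) (simp add: \<tau>_def)
  moreover have "\<tau> (base + int i) - \<sigma> (base + int i) = 0" if "i < lspan P" for i
    using that by (simp add: \<sigma>_def extend_window if_distrib cong: if_cong)
  ultimately have "\<tau> j - \<sigma> j = 0" for j by (rule recurrent_zero_on_window)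
  then have "\<tau> = \<sigma>" by auto
  moreover have "T = trace_of \<tau>"
    unfolding \<tau>_def by (rule twisted_traces_eq_trace_of(2)[OF T])
  ultimately have "T = trace_of \<sigma>" by simp
  also have "\<dots> = (\<Sum>r<lspan P. (\<lambda>x. \<tau> (base + int r) * trace_basis r x))"
    by (simp add: fun_eq_iff \<sigma>_def trace_of_lincomb trace_basis_def sum_fun_apply)
  finally show ?thesis by (simp add: \<tau>_def)
qed

lemma independent_trace_basis: "functionals.independent (trace_basis ` {..<lspan P})"
proof
  assume "functionals.dependent (trace_basis ` {..<lspan P})"
  then obtain u where u: "\<exists>v\<in>trace_basis ` {..<lspan P}. u v \<noteq> 0"
    "(\<Sum>v\<in>trace_basis ` {..<lspan P}. (\<lambda>x. u v * v x)) = 0"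
    using functionals.dependent_finite[of "trace_basis ` {..<lspan P}"] by auto
  have sum0: "(\<Sum>r<lspan P. u (trace_basis r) * trace_basis r x) = 0" for x
    using fun_cong[OF u(2), of x] by (simp add: sum.reindex[OF inj_on_trace_basis] sum_fun_apply)
  have "u (trace_basis i) = 0" if "i < lspan P" for i
    using sum0[of "mono 0 (base + int i)"] that
    by (simp add: trace_basis_window if_distrib cong: if_cong)
  then show False using u(1) by auto
qed

lemma dim_twisted_traces: "functionals.dim (twisted_traces q P t) = lspan P"
proof -
  have "trace_basis ` {..<lspan P} \<subseteq> twisted_traces q P t"
    using trace_basis_twisted_traces by blast
  moreover have "twisted_traces q P t \<subseteq> functionals.span (trace_basis ` {..<lspan P})"
  proof
    fix T assume "T \<in> twisted_traces q P t"
    have "(\<Sum>r<lspan P. (\<lambda>x. T (mono 0 (base + int r)) * trace_basis r x))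
        \<in> functionals.span (trace_basis ` {..<lspan P})"
      by (intro functionals.span_sum functionals.span_scale functionals.span_base) simp
    then show "T \<in> functionals.span (trace_basis ` {..<lspan P})"
      using twisted_traces_expansion[OF \<open>T \<in> twisted_traces q P t\<close>] by simp
  qed
  ultimately have "card (trace_basis ` {..<lspan P}) = functionals.dim (twisted_traces q P t)"
    by (rule functionals.basis_card_eq_dim[OF _ _ independent_trace_basis])
  then show ?thesis by (simp add: card_image[OF inj_on_trace_basis])
qed

end

theorem proposition2p1:
  fixes q t :: complex and P :: "int \<Rightarrow> complex"
  assumes "0 < norm q" and "norm q < 1"
    and "finite {j. P j \<noteq> 0}" and "{j. P j \<noteq> 0} \<noteq> {}"
    and "lspan P > 0"
    and "t \<noteq> 0"
  shows "(\<forall>T. linear_on (qWeyl q P) T \<longrightarrow>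
            (twisted_trace q P t T \<longleftrightarrow>
              ((\<forall>i. i \<noteq> 0 \<longrightarrow> (\<forall>x\<in>grade q P i. T x = 0)) \<and>
               (\<forall>R :: int \<Rightarrow> complex. finite {j. R j \<noteq> 0} \<longrightarrow>
                  T (mult q (lp P (inverse q)) (lp R (inverse q))
                     - smul t (mult q (lp P q) (lp R q))) = 0))))
       \<and> vector_space.dim (\<lambda>c (f :: elt \<Rightarrow> complex) x. c * f x)
           {T. linear_on (qWeyl q P) T \<and> twisted_trace q P t T
               \<and> (\<forall>x. x \<notin> qWeyl q P \<longrightarrow> T x = 0)} = lspan P"
proof -
  interpret qweyl_twisted q P t
    using assms powi_ne_one[OF assms(1,2)] by unfold_locales auto
  show ?thesis
    using twisted_trace_iff[OF assms(6)] dim_twisted_traces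
    unfolding kills_nonzero_degrees_def twisted_relation_def twisted_difference_def twisted_traces_def
    by blast
qed

end
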